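(* Let $V$ be a finite-dimensional real vector space with a nondegenerate symmetric bilinear form $b$, and let $J\in PC(V)$ be a metric-$b$ algebraic Jacobi curvature operator. Put $G(x)=1_V-\tfrac13J(x,x)$ for $x\in V$, let $U_J=\{x\in V:G(x)\text{ invertible}\}$ (an open set containing $0$), and define $g_x(u,v)=b(G(x)u,v)$ on $U_J$. Then $g$ is a semi-Riemannian metric on $U_J$ with $g_0=b$, its Levi-Civita connection is $$(\nabla^g_uv)(x)=(D_uv)(x)+\tfrac23\,G(x)^{-1}J(u(x),v(x))x,$$ and its Riemann and Jacobi curvature operators at $0$ satisfy $\mathcal R_{\nabla^g}(0)=R_J$ and $\mathcal J_{\nabla^g}(0)=J$.
   Context: $PC(V)$: bilinear maps $V\times V\to L(V;V)$. $J$ is a metric-$b$ algebraic Jacobi curvature operator if $J(u,v)=J(v,u)$, $J(u,v)w+J(v,w)u+J(w,u)v=0$, and $b(J(u,v)w,x)=b(J(w,x)u,v)$ for all $u,v,w,x$. $D$ is ordinary differentiation of $V$-valued functions (vector fields on open subsets of $V$). Curvature: $\mathcal R_\nabla(u,v)=[\nabla_u,\nabla_v]-\nabla_{[u,v]}$; $R_J(u,v)w=\tfrac23(J(w,v)u-J(w,u)v)$; Jacobi operator $\mathcal J_\nabla(u,v)w=\tfrac12(\mathcal R_\nabla(w,v)u+\mathcal R_\nabla(w,u)v)$. *)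

theory Defs
  imports "HOL-Analysis.Analysis"
begin

fun Ck_on :: "nat \<Rightarrow> 'a::real_normed_vector set \<Rightarrow> ('a \<Rightarrow> 'b::real_normed_vector) \<Rightarrow> bool" where
  "Ck_on 0 U f = continuous_on U f"
| "Ck_on (Suc n) U f =
     (f differentiable_on U \<and> (\<forall>h. Ck_on n U (\<lambda>x. frechet_derivative f (at x) h)))"

definition smooth_fn_on :: "'a::real_normed_vector set \<Rightarrow> ('a \<Rightarrow> 'b::real_normed_vector) \<Rightarrow> bool" where
  "smooth_fn_on U f \<longleftrightarrow> (\<forall>n. Ck_on n U f)"

definition Dir :: "('a::real_normed_vector \<Rightarrow> 'b::real_normed_vector) \<Rightarrow> 'a \<Rightarrow> 'a \<Rightarrow> 'b" where
  "Dir f x a = frechet_derivative f (at x) a"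

definition Dflat :: "('v::real_normed_vector \<Rightarrow> 'v) \<Rightarrow> ('v \<Rightarrow> 'v) \<Rightarrow> 'v \<Rightarrow> 'v" where
  "Dflat u v x = Dir v x (u x)"

definition lie :: "('v::real_normed_vector \<Rightarrow> 'v) \<Rightarrow> ('v \<Rightarrow> 'v) \<Rightarrow> 'v \<Rightarrow> 'v" where
  "lie u v x = Dflat u v x - Dflat v u x"

definition sym_form :: "('v \<Rightarrow> 'v \<Rightarrow> real) \<Rightarrow> bool" where
  "sym_form q \<longleftrightarrow> (\<forall>u v. q u v = q v u)"

definition nondegenerate :: "('v::real_vector \<Rightarrow> 'v \<Rightarrow> real) \<Rightarrow> bool" where
  "nondegenerate q \<longleftrightarrow> (\<forall>u. (\<forall>v. q u v = 0) \<longrightarrow> u = 0)"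

definition neg_index :: "('v::euclidean_space \<Rightarrow> 'v \<Rightarrow> real) \<Rightarrow> nat" where
  "neg_index q = Max {dim W | W. subspace W \<and> (\<forall>w\<in>W. w \<noteq> 0 \<longrightarrow> q w w < 0)}"

text \<open>J u v w stands for J(u,v)w: bilinear in (u,v), linear in w.\<close>
definition PC :: "('v::real_vector \<Rightarrow> 'v \<Rightarrow> 'v \<Rightarrow> 'v) \<Rightarrow> bool" where
  "PC J \<longleftrightarrow> (\<forall>u v. linear (J u v)) \<and> (\<forall>w. bilinear (\<lambda>u v. J u v w))"

definition metric_jacobi :: "('v::real_vector \<Rightarrow> 'v \<Rightarrow> real) \<Rightarrow> ('v \<Rightarrow> 'v \<Rightarrow> 'v \<Rightarrow> 'v) \<Rightarrow> bool" where
  "metric_jacobi b J \<longleftrightarrow> PC J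
     \<and> (\<forall>u v. J u v = J v u)
     \<and> (\<forall>u v w. J u v w + J v w u + J w u v = 0)
     \<and> (\<forall>u v w x. b (J u v w) x = b (J w x u) v)"

definition R_J :: "('v::real_vector \<Rightarrow> 'v \<Rightarrow> 'v \<Rightarrow> 'v) \<Rightarrow> 'v \<Rightarrow> 'v \<Rightarrow> 'v \<Rightarrow> 'v" where
  "R_J J u v w = (2/3) *\<^sub>R (J w v u - J w u v)"

definition semi_riemannian_on ::
  "'v::euclidean_space set \<Rightarrow> ('v \<Rightarrow> 'v \<Rightarrow> 'v \<Rightarrow> real) \<Rightarrow> bool" where
  "semi_riemannian_on U g \<longleftrightarrow> open U
     \<and> (\<forall>x\<in>U. bilinear (g x) \<and> sym_form (g x) \<and> nondegenerate (g x))
     \<and> (\<forall>u v. smooth_fn_on U (\<lambda>x. g x u v))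
     \<and> (\<forall>x\<in>U. \<exists>e>0. \<forall>y\<in>U \<inter> ball x e. neg_index (g y) = neg_index (g x))"

definition vfields :: "'v::euclidean_space set \<Rightarrow> ('v \<Rightarrow> 'v) set" where
  "vfields U = {u. smooth_fn_on U u}"

definition sfuns :: "'v::euclidean_space set \<Rightarrow> ('v \<Rightarrow> real) set" where
  "sfuns U = {f. smooth_fn_on U f}"

definition affine_connection ::
  "'v::euclidean_space set \<Rightarrow> (('v \<Rightarrow> 'v) \<Rightarrow> ('v \<Rightarrow> 'v) \<Rightarrow> 'v \<Rightarrow> 'v) \<Rightarrow> bool" where
  "affine_connection U nabla \<longleftrightarrow>
     (\<forall>u\<in>vfields U. \<forall>v\<in>vfields U. smooth_fn_on U (nabla u v))
   \<and> (\<forall>u\<in>vfields U. \<forall>w\<in>vfields U. \<forall>v\<in>vfields U. \<forall>x\<in>U.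
        nabla (\<lambda>y. u y + w y) v x = nabla u v x + nabla w v x
      \<and> nabla u (\<lambda>y. v y + w y) x = nabla u v x + nabla u w x)
   \<and> (\<forall>f\<in>sfuns U. \<forall>u\<in>vfields U. \<forall>v\<in>vfields U. \<forall>x\<in>U.
        nabla (\<lambda>y. f y *\<^sub>R u y) v x = f x *\<^sub>R nabla u v x
      \<and> nabla u (\<lambda>y. f y *\<^sub>R v y) x = Dir f x (u x) *\<^sub>R v x + f x *\<^sub>R nabla u v x)"

definition levi_civita ::
  "'v::euclidean_space set \<Rightarrow> ('v \<Rightarrow> 'v \<Rightarrow> 'v \<Rightarrow> real)
     \<Rightarrow> (('v \<Rightarrow> 'v) \<Rightarrow> ('v \<Rightarrow> 'v) \<Rightarrow> 'v \<Rightarrow> 'v) \<Rightarrow> bool" where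
  "levi_civita U g nabla \<longleftrightarrow> affine_connection U nabla
   \<and> (\<forall>u\<in>vfields U. \<forall>v\<in>vfields U. \<forall>x\<in>U. nabla u v x - nabla v u x = lie u v x)
   \<and> (\<forall>u\<in>vfields U. \<forall>v\<in>vfields U. \<forall>w\<in>vfields U. \<forall>x\<in>U.
        Dir (\<lambda>y. g y (v y) (w y)) x (u x) = g x (nabla u v x) (w x) + g x (v x) (nabla u w x))"

definition curv ::
  "(('v::real_normed_vector \<Rightarrow> 'v) \<Rightarrow> ('v \<Rightarrow> 'v) \<Rightarrow> 'v \<Rightarrow> 'v)
     \<Rightarrow> ('v \<Rightarrow> 'v) \<Rightarrow> ('v \<Rightarrow> 'v) \<Rightarrow> ('v \<Rightarrow> 'v) \<Rightarrow> 'v \<Rightarrow> 'v" where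
  "curv nabla u v w x = nabla u (nabla v w) x - nabla v (nabla u w) x - nabla (lie u v) w x"

definition jacobi_op ::
  "(('v::real_normed_vector \<Rightarrow> 'v) \<Rightarrow> ('v \<Rightarrow> 'v) \<Rightarrow> 'v \<Rightarrow> 'v)
     \<Rightarrow> ('v \<Rightarrow> 'v) \<Rightarrow> ('v \<Rightarrow> 'v) \<Rightarrow> ('v \<Rightarrow> 'v) \<Rightarrow> 'v \<Rightarrow> 'v" where
  "jacobi_op nabla u v w x = (1/2) *\<^sub>R (curv nabla w v u x + curv nabla w u v x)"

definition Gop :: "('v::real_vector \<Rightarrow> 'v \<Rightarrow> 'v \<Rightarrow> 'v) \<Rightarrow> 'v \<Rightarrow> 'v \<Rightarrow> 'v" where
  "Gop J x = (\<lambda>u. u - (1/3) *\<^sub>R J x x u)"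

definition U_J :: "('v::real_vector \<Rightarrow> 'v \<Rightarrow> 'v \<Rightarrow> 'v) \<Rightarrow> 'v set" where
  "U_J J = {x. bij (Gop J x)}"

definition gJ :: "('v::real_vector \<Rightarrow> 'v \<Rightarrow> real) \<Rightarrow> ('v \<Rightarrow> 'v \<Rightarrow> 'v \<Rightarrow> 'v) \<Rightarrow> 'v \<Rightarrow> 'v \<Rightarrow> 'v \<Rightarrow> real" where
  "gJ b J x u v = b (Gop J x u) v"

definition nablaJ ::
  "('v::real_normed_vector \<Rightarrow> 'v \<Rightarrow> 'v \<Rightarrow> 'v) \<Rightarrow> ('v \<Rightarrow> 'v) \<Rightarrow> ('v \<Rightarrow> 'v) \<Rightarrow> 'v \<Rightarrow> 'v" where
  "nablaJ J u v x = Dflat u v x + (2/3) *\<^sub>R inv (Gop J x) (J (u x) (v x) x)"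

end

(* Put G(x) = 1 - J(x,x)/3.  The form g_x = b(G(x) _, _) is symmetric because
   b(J(x,x)u,v) = b(J(u,v)x,x) is symmetric in u and v, and it is nondegenerate wherever G(x) is
   invertible.  Since G depends polynomially on x, the inverse G(x)^-1 is locally Lipschitz in the
   operator norm on the open set U_J; this makes x |-> G(x)^-1 z(x) smooth for smooth z, and it keeps
   the index of g locally constant, because a form close to a nondegenerate one stays negative
   definite on a maximal negative definite subspace and positive definite on its orthogonal
   complement.
   The proposed connection is torsion free since J is symmetric.  Differentiating g(v,w) leaves the
   defect (2/3)(b(J(x,h)v,w) + b(J(h,v)x,w) + b(J(h,w)x,v)), which vanishes by the metric symmetry of
   J and the first Bianchi identity; uniqueness is the usual argument for Levi-Civita connections.
   At 0 we have G(0) = 1, and the Christoffel term (2/3) G(x)^-1 J(u,v)x has derivative (2/3) J(u,v)h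
   there.  By the symmetry of second derivatives the second-order terms cancel in the curvature, so
   R(u,v)w = (2/3)(J(v,w)u - J(u,w)v) = R_J(u,v)w at 0, and the Jacobi operator at 0 reduces to J
   by the Bianchi identity. *)

theory Submission
  imports Defs
begin

lemma frechet_derivative_apply:
  "(f has_derivative f') (at x) \<Longrightarrow> frechet_derivative f (at x) h = f' h"
  using frechet_derivative_at by metis

lemma Ck_on_frechet_derivative: "Ck_on (Suc n) U f \<Longrightarrow> Ck_on n U (\<lambda>x. frechet_derivative f (at x) h)"
  by simp

lemma Ck_on_cong:
  assumes "open U" "\<And>x. x \<in> U \<Longrightarrow> f x = g x" "Ck_on n U f"
  shows "Ck_on n U g"
  using assms
proof (induction n arbitrary: f g)
  case 0
  then show ?case by (metis Ck_on.simps(1) continuous_on_cong)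
next
  case (Suc n)
  have f: "\<And>x. x \<in> U \<Longrightarrow> f differentiable (at x)"
    using Suc.prems by (auto simp: differentiable_on_eq_differentiable_at)
  have "g differentiable_on U"
    using f Suc.prems(1,2) has_derivative_transform_within_open
    by (fastforce simp: differentiable_on_eq_differentiable_at differentiable_def)
  moreover have "Ck_on n U (\<lambda>x. frechet_derivative g (at x) h)" for h
  proof (rule Suc.IH[OF Suc.prems(1) _ Ck_on_frechet_derivative[OF Suc.prems(3)]])
    show "frechet_derivative f (at x) h = frechet_derivative g (at x) h" if "x \<in> U" for x
      using frechet_derivative_transform_within_open[OF f[OF that] Suc.prems(1) that Suc.prems(2)] by simp
  qed
  ultimately show ?case by simp
qed

lemma Ck_on_has_derivative:
  "Ck_on (Suc n) U f \<Longrightarrow> open U \<Longrightarrow> x \<in> U \<Longrightarrow> (f has_derivative frechet_derivative f (at x)) (at x)"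
  by (simp add: differentiable_on_eq_differentiable_at frechet_derivative_works)

lemma Ck_on_SucI:
  assumes "open U" and "\<And>x. x \<in> U \<Longrightarrow> (f has_derivative D x) (at x)"
    and "\<And>h. Ck_on n U (\<lambda>x. D x h)"
  shows "Ck_on (Suc n) U f"
proof -
  have "f differentiable_on U"
    using assms(1,2) by (auto simp: differentiable_on_eq_differentiable_at differentiable_def)
  moreover have "Ck_on n U (\<lambda>x. frechet_derivative f (at x) h)" for h
    using frechet_derivative_apply[OF assms(2)] by (intro Ck_on_cong[OF assms(1) _ assms(3)[of h]]) simp
  ultimately show ?thesis by simp
qed

lemma Ck_on_Suc_imp: "Ck_on (Suc n) U f \<Longrightarrow> Ck_on n U f"
  by (induction n arbitrary: f) (auto simp: differentiable_imp_continuous_on)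

lemma Ck_on_const: "Ck_on n U (\<lambda>x. c)"
  by (induction n arbitrary: c) auto

lemma Ck_on_ident: "open U \<Longrightarrow> Ck_on n U (\<lambda>x. x)"
  by (induction n) (auto simp: Ck_on_const differentiable_on_id)

lemma Ck_on_add:
  assumes "open U"
  shows "Ck_on n U f \<Longrightarrow> Ck_on n U g \<Longrightarrow> Ck_on n U (\<lambda>x. f x + g x)"
proof (induction n arbitrary: f g)
  case 0
  then show ?case by (simp add: continuous_on_add)
next
  case (Suc n)
  show ?case
    using Suc Ck_on_has_derivative[OF Suc.prems(1) assms] Ck_on_has_derivative[OF Suc.prems(2) assms]
    by (intro Ck_on_SucI[OF assms,
          where D="\<lambda>x h. frechet_derivative f (at x) h + frechet_derivative g (at x) h"] has_derivative_add)
      auto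
qed

lemma Ck_on_bilinear:
  assumes B: "bounded_bilinear B" and U: "open U"
  shows "Ck_on n U f \<Longrightarrow> Ck_on n U g \<Longrightarrow> Ck_on n U (\<lambda>x. B (f x) (g x))"
proof (induction n arbitrary: f g)
  case 0
  then show ?case using bounded_bilinear.continuous_on[OF B] by simp
next
  case (Suc n)
  show ?case
  proof (rule Ck_on_SucI[OF U])
    show "((\<lambda>x. B (f x) (g x)) has_derivative
        (\<lambda>h. B (f x) (frechet_derivative g (at x) h) + B (frechet_derivative f (at x) h) (g x))) (at x)"
      if "x \<in> U" for x
      using Suc.prems that U by (intro bounded_bilinear.FDERIV[OF B] Ck_on_has_derivative)
    show "Ck_on n U (\<lambda>x. B (f x) (frechet_derivative g (at x) h) + B (frechet_derivative f (at x) h) (g x))" for h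
    proof (rule Ck_on_add[OF U])
      show "Ck_on n U (\<lambda>x. B (f x) (frechet_derivative g (at x) h))"
        by (rule Suc.IH[OF Ck_on_Suc_imp[OF Suc.prems(1)] Ck_on_frechet_derivative[OF Suc.prems(2)]])
      show "Ck_on n U (\<lambda>x. B (frechet_derivative f (at x) h) (g x))"
        by (rule Suc.IH[OF Ck_on_frechet_derivative[OF Suc.prems(1)] Ck_on_Suc_imp[OF Suc.prems(2)]])
    qed
  qed
qed

lemma Ck_on_linear:
  assumes L: "bounded_linear L" and U: "open U"
  shows "Ck_on n U f \<Longrightarrow> Ck_on n U (\<lambda>x. L (f x))"
proof (induction n arbitrary: f)
  case 0
  then show ?case using L by (simp add: bounded_linear.continuous_on)
next
  case (Suc n)
  show ?case
    using Suc Ck_on_has_derivative[OF Suc.prems U]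
    by (intro Ck_on_SucI[OF U, where D="\<lambda>x h. L (frechet_derivative f (at x) h)"]
        bounded_linear.has_derivative[OF L]) auto
qed

lemma Ck_on_sum:
  assumes "open U" "finite S" "\<And>i. i \<in> S \<Longrightarrow> Ck_on n U (f i)"
  shows "Ck_on n U (\<lambda>x. \<Sum>i\<in>S. f i x)"
  using assms(2,3)
proof (induction S rule: finite_induct)
  case empty
  then show ?case by (simp add: Ck_on_const)
next
  case (insert a F)
  then show ?case using Ck_on_add[OF assms(1), of n "f a" "\<lambda>x. \<Sum>i\<in>F. f i x"] by simp
qed

lemma Ck_on_scaleR: "open U \<Longrightarrow> Ck_on n U f \<Longrightarrow> Ck_on n U g \<Longrightarrow> Ck_on n U (\<lambda>x. f x *\<^sub>R g x)"
  using Ck_on_bilinear[OF bounded_bilinear_scaleR] by blast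

lemma Ck_on_mult: "open U \<Longrightarrow> Ck_on n U f \<Longrightarrow> Ck_on n U g \<Longrightarrow> Ck_on n U (\<lambda>x. f x * (g x :: real))"
  using Ck_on_bilinear[OF bounded_bilinear_mult] by blast

lemma Ck_on_inner: "open U \<Longrightarrow> Ck_on n U f \<Longrightarrow> Ck_on n U g \<Longrightarrow> Ck_on n U (\<lambda>x. f x \<bullet> g x)"
  using Ck_on_bilinear[OF bounded_bilinear_inner] by blast

lemma Ck_on_scaleR_const: "open U \<Longrightarrow> Ck_on n U g \<Longrightarrow> Ck_on n U (\<lambda>x. c *\<^sub>R g x)"
  using Ck_on_scaleR[OF _ Ck_on_const] by blast

lemma Ck_on_diff:
  assumes "open U" "Ck_on n U f" "Ck_on n U g"
  shows "Ck_on n U (\<lambda>x. f x - g x)"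
  using Ck_on_add[OF assms(1,2) Ck_on_scaleR_const[OF assms(1,3), of "-1"]] by simp

lemma linear_Basis_expansion:
  fixes f :: "'a::euclidean_space \<Rightarrow> 'b::real_vector"
  assumes "linear f"
  shows "f h = (\<Sum>i\<in>Basis. (h \<bullet> i) *\<^sub>R f i)"
proof -
  have "f h = f (\<Sum>i\<in>Basis. (h \<bullet> i) *\<^sub>R i)" by (simp add: euclidean_representation)
  also have "\<dots> = (\<Sum>i\<in>Basis. (h \<bullet> i) *\<^sub>R f i)"
    using assms by (simp add: linear_sum linear_scale)
  finally show ?thesis .
qed

lemma Dflat_Basis_expansion:
  fixes u v :: "'v::euclidean_space \<Rightarrow> 'v"
  assumes "v differentiable (at x)"
  shows "Dflat u v x = (\<Sum>i\<in>Basis. (u x \<bullet> i) *\<^sub>R frechet_derivative v (at x) i)"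
  unfolding Dflat_def Dir_def
  using assms frechet_derivative_works has_derivative_linear linear_Basis_expansion by blast

lemma Ck_on_Dflat:
  fixes u v :: "'v::euclidean_space \<Rightarrow> 'v"
  assumes U: "open U" and v: "Ck_on (Suc n) U v" and u: "Ck_on n U u"
  shows "Ck_on n U (Dflat u v)"
proof (rule Ck_on_cong[OF U])
  show "Ck_on n U (\<lambda>x. \<Sum>i\<in>Basis. (u x \<bullet> i) *\<^sub>R frechet_derivative v (at x) i)"
    by (intro Ck_on_sum[OF U] finite_Basis Ck_on_scaleR[OF U] Ck_on_inner[OF U] u Ck_on_const
        Ck_on_frechet_derivative v)
  show "(\<Sum>i\<in>Basis. (u x \<bullet> i) *\<^sub>R frechet_derivative v (at x) i) = Dflat u v x" if "x \<in> U" for x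
    using v U that by (simp add: Dflat_Basis_expansion differentiable_on_eq_differentiable_at)
qed

lemma PC_linear: "PC T \<Longrightarrow> linear (T u v)"
  by (simp add: PC_def)

lemma PC_bilinear: "PC T \<Longrightarrow> bilinear (\<lambda>u v. T u v w)"
  by (simp add: PC_def)

lemma PC_Basis_expansion:
  fixes T :: "'v::euclidean_space \<Rightarrow> 'v \<Rightarrow> 'v \<Rightarrow> 'v"
  assumes T: "PC T"
  shows "T a c d = (\<Sum>i\<in>Basis. \<Sum>j\<in>Basis. ((a \<bullet> i) * (c \<bullet> j)) *\<^sub>R T i j d)"
proof -
  have "T a c d = T (\<Sum>i\<in>Basis. (a \<bullet> i) *\<^sub>R i) (\<Sum>j\<in>Basis. (c \<bullet> j) *\<^sub>R j) d"
    by (simp add: euclidean_representation)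
  also have "\<dots> = (\<Sum>(i,j)\<in>Basis \<times> Basis. T ((a \<bullet> i) *\<^sub>R i) ((c \<bullet> j) *\<^sub>R j) d)"
    using bilinear_sum[OF PC_bilinear[OF T], of "\<lambda>i. (a \<bullet> i) *\<^sub>R i" Basis "\<lambda>j. (c \<bullet> j) *\<^sub>R j" Basis]
    by simp
  also have "\<dots> = (\<Sum>i\<in>Basis. \<Sum>j\<in>Basis. ((a \<bullet> i) * (c \<bullet> j)) *\<^sub>R T i j d)"
    by (simp add: sum.cartesian_product bilinear_lmul[OF PC_bilinear[OF T]]
        bilinear_rmul[OF PC_bilinear[OF T]] mult.commute)
  finally show ?thesis .
qed

lemma has_derivative_PC:
  fixes T :: "'v::euclidean_space \<Rightarrow> 'v \<Rightarrow> 'v \<Rightarrow> 'v"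
  assumes T: "PC T"
    and p: "(p has_derivative p') (at x)" and q: "(q has_derivative q') (at x)"
    and r: "(r has_derivative r') (at x)"
  shows "((\<lambda>y. T (p y) (q y) (r y)) has_derivative
           (\<lambda>h. T (p' h) (q x) (r x) + T (p x) (q' h) (r x) + T (p x) (q x) (r' h))) (at x)"
proof -
  have lin: "bounded_linear (T i j)" for i j
    using PC_linear[OF T] linear_conv_bounded_linear by blast
  have "((\<lambda>y. \<Sum>i\<in>Basis. \<Sum>j\<in>Basis. ((p y \<bullet> i) * (q y \<bullet> j)) *\<^sub>R T i j (r y)) has_derivative
     (\<lambda>h. \<Sum>i\<in>Basis. \<Sum>j\<in>Basis. ((p x \<bullet> i) * (q x \<bullet> j)) *\<^sub>R T i j (r' h)
         + ((p x \<bullet> i) * (q' h \<bullet> j) + (p' h \<bullet> i) * (q x \<bullet> j)) *\<^sub>R T i j (r x))) (at x)"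
    by (intro has_derivative_sum has_derivative_scaleR has_derivative_mult has_derivative_inner_left
          bounded_linear.has_derivative[OF lin] p q r)
  then show ?thesis
    by (simp add: PC_Basis_expansion[OF T, symmetric] scaleR_add_left sum.distrib algebra_simps)
qed

lemma Ck_on_PC:
  fixes T :: "'v::euclidean_space \<Rightarrow> 'v \<Rightarrow> 'v \<Rightarrow> 'v"
  assumes T: "PC T" and U: "open U"
    and p: "Ck_on n U p" and q: "Ck_on n U q" and r: "Ck_on n U r"
  shows "Ck_on n U (\<lambda>x. T (p x) (q x) (r x))"
proof -
  have lin: "bounded_linear (T i j)" for i j
    using PC_linear[OF T] linear_conv_bounded_linear by blast
  have "Ck_on n U (\<lambda>x. \<Sum>i\<in>Basis. \<Sum>j\<in>Basis. ((p x \<bullet> i) * (q x \<bullet> j)) *\<^sub>R T i j (r x))"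
    by (intro Ck_on_sum[OF U] finite_Basis Ck_on_scaleR[OF U] Ck_on_mult[OF U] Ck_on_inner[OF U]
        Ck_on_linear[OF lin U] p q r Ck_on_const)
  then show ?thesis by (simp add: PC_Basis_expansion[OF T, symmetric])
qed

lemma PC_bounded:
  fixes T :: "'v::euclidean_space \<Rightarrow> 'v \<Rightarrow> 'v \<Rightarrow> 'v"
  assumes T: "PC T"
  shows "\<exists>K\<ge>0. \<forall>a c d. norm (T a c d) \<le> K * norm a * norm c * norm d"
proof -
  define S where "S = (\<Sum>i\<in>(Basis::'v set). \<Sum>j\<in>(Basis::'v set). onorm (T i j))"
  have lin: "bounded_linear (T i j)" for i j
    using PC_linear[OF T] linear_conv_bounded_linear by blast
  have "norm (T a c d) \<le> S * norm a * norm c * norm d" for a c d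
  proof -
    have "norm (((a \<bullet> i) * (c \<bullet> j)) *\<^sub>R T i j d) \<le> norm a * norm c * norm d * onorm (T i j)"
      if "i \<in> Basis" "j \<in> Basis" for i j
    proof -
      have "norm (((a \<bullet> i) * (c \<bullet> j)) *\<^sub>R T i j d) = \<bar>a \<bullet> i\<bar> * \<bar>c \<bullet> j\<bar> * norm (T i j d)"
        by (simp add: abs_mult)
      also have "\<dots> \<le> norm a * norm c * (onorm (T i j) * norm d)"
        using that Basis_le_norm onorm[OF lin] by (intro mult_mono) auto
      finally show ?thesis by (simp add: mult_ac)
    qed
    then have "norm (T a c d) \<le> (\<Sum>i\<in>Basis. \<Sum>j\<in>Basis. norm a * norm c * norm d * onorm (T i j))"
      unfolding PC_Basis_expansion[OF T, of a c d]
      by (intro order_trans[OF norm_sum] sum_mono) (simp add: order_trans[OF norm_sum] sum_mono)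
    then show ?thesis by (simp add: S_def sum_distrib_left mult_ac)
  qed
  moreover have "0 \<le> S"
    unfolding S_def using onorm_pos_le[OF lin] by (intro sum_nonneg) auto
  ultimately show ?thesis by blast
qed

lemma eventually_nhds_norm_diff_less:
  fixes x :: "'a::real_normed_vector"
  assumes "0 < e"
  shows "eventually (\<lambda>y. c * norm (y - x) < e) (nhds x)"
proof -
  have "((\<lambda>y. c * norm (y - x)) \<longlongrightarrow> c * norm (x - x)) (nhds x)"
    by (intro tendsto_intros) (rule filterlim_ident)
  then show ?thesis using assms by (intro order_tendstoD(2)) auto
qed

lemma isCont_operator_family_apply:
  fixes A :: "'a::real_normed_vector \<Rightarrow> 'b::real_normed_vector \<Rightarrow> 'c::real_normed_vector"
  assumes "bounded_linear (A x)"
    and A: "eventually (\<lambda>y. \<forall>w. norm (A y w - A x w) \<le> K * norm (y - x) * norm w) (at x)"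
    and z: "isCont z x"
  shows "isCont (\<lambda>y. A y (z y)) x"
proof -
  have "((\<lambda>y. A y (z y) - A x (z y)) \<longlongrightarrow> 0) (at x)"
  proof (rule Lim_null_comparison)
    show "eventually (\<lambda>y. norm (A y (z y) - A x (z y)) \<le> K * norm (y - x) * norm (z y)) (at x)"
      using A by eventually_elim blast
    have "((\<lambda>y. K * norm (y - x) * norm (z y)) \<longlongrightarrow> K * norm (x - x) * norm (z x)) (at x)"
      using z unfolding isCont_def by (intro tendsto_intros)
    then show "((\<lambda>y. K * norm (y - x) * norm (z y)) \<longlongrightarrow> 0) (at x)" by simp
  qed
  moreover have "((\<lambda>y. A x (z y)) \<longlongrightarrow> A x (z x)) (at x)"
    using bounded_linear.isCont[OF assms(1) z] unfolding isCont_def .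
  ultimately have "((\<lambda>y. A x (z y) + (A y (z y) - A x (z y))) \<longlongrightarrow> A x (z x) + 0) (at x)"
    by (intro tendsto_add)
  then show ?thesis unfolding isCont_def by simp
qed

lemma has_derivative_operator_family_apply:
  fixes A :: "'a::real_normed_vector \<Rightarrow> 'b::real_normed_vector \<Rightarrow> 'c::real_normed_vector"
  assumes Ax: "bounded_linear (A x)"
    and A: "eventually (\<lambda>y. \<forall>w. norm (A y w - A x w) \<le> K * norm (y - x) * norm w) (at x)"
    and r: "(r has_derivative r') (at x)" and "r x = 0"
  shows "((\<lambda>y. A y (r y)) has_derivative (\<lambda>h. A x (r' h))) (at x)"
proof -
  define E where "E y = A y (r y) - A x (r y)" for y
  have "(E has_derivative (\<lambda>_. 0)) (at x)"
    unfolding has_derivative_iff_norm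
  proof (intro conjI bounded_linear_zero)
    have "eventually (\<lambda>y. norm (norm (E y - E x - 0) / norm (y - x)) \<le> K * norm (r y)) (at x)"
      using A eventually_neq_at_within[of x x UNIV]
    proof eventually_elim
      case (elim y)
      then have "norm (E y) \<le> K * norm (r y) * norm (y - x)"
        by (simp add: E_def mult_ac)
      then show ?case
        using elim(2) by (simp add: E_def pos_divide_le_eq)
    qed
    moreover have "((\<lambda>y. K * norm (r y)) \<longlongrightarrow> K * norm (r x)) (at x)"
      using has_derivative_continuous[OF r] unfolding isCont_def by (intro tendsto_intros)
    then have "((\<lambda>y. K * norm (r y)) \<longlongrightarrow> 0) (at x)"
      using \<open>r x = 0\<close> by simp
    ultimately show "((\<lambda>y. norm (E y - E x - 0) / norm (y - x)) \<longlongrightarrow> 0) (at x)"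
      by (rule Lim_null_comparison)
  qed
  then have "((\<lambda>y. A x (r y) + E y) has_derivative (\<lambda>h. A x (r' h) + 0)) (at x)"
    by (intro has_derivative_add bounded_linear.has_derivative[OF Ax r])
  then show ?thesis by (simp add: E_def)
qed

lemma inverse_operator_family_lipschitz:
  fixes L :: "'a::real_normed_vector \<Rightarrow> 'v::euclidean_space \<Rightarrow> 'v"
  assumes lin: "\<And>y. linear (L y)" and bij: "bij (L x)" and "0 \<le> c"
    and L: "eventually (\<lambda>y. \<forall>u. norm (L y u - L x u) \<le> c * norm (y - x) * norm u) (nhds x)"
  shows "\<exists>K. eventually (\<lambda>y. bij (L y)
           \<and> (\<forall>w. norm (inv (L y) w - inv (L x) w) \<le> K * norm (y - x) * norm w)) (nhds x)"
proof -
  have inv_lin: "linear (inv (L x))"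
    using bij lin bij_is_inj inj_linear_imp_inv_linear by blast
  obtain M where M: "M > 0" "\<And>w. norm (inv (L x) w) \<le> M * norm w"
    using linear_bounded_pos[OF inv_lin] by blast
  have "eventually (\<lambda>y. c * norm (y - x) < 1 / (2 * M)) (nhds x)"
    using M by (intro eventually_nhds_norm_diff_less) auto
  with L have "eventually (\<lambda>y. bij (L y)
           \<and> (\<forall>w. norm (inv (L y) w - inv (L x) w) \<le> (2 * M * M * c) * norm (y - x) * norm w)) (nhds x)"
  proof eventually_elim
    case (elim y)
    have lower: "norm u \<le> 2 * M * norm (L y u)" for u
    proof -
      have "norm u = norm (inv (L x) (L x u))" by (simp add: bij bij_is_inj)
      also have "\<dots> \<le> M * norm (L x u)" by (rule M(2))
      also have "\<dots> \<le> M * (norm (L y u) + c * norm (y - x) * norm u)"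
      proof -
        have "norm (L x u - L y u) \<le> c * norm (y - x) * norm u"
          using elim(1) by (simp add: norm_minus_commute)
        then show ?thesis
          using norm_triangle_sub[of "L x u" "L y u"] M(1) by (intro mult_left_mono) auto
      qed
      also have "\<dots> = M * norm (L y u) + M * (c * norm (y - x)) * norm u"
        by (simp add: algebra_simps)
      also have "\<dots> \<le> M * norm (L y u) + M * (1 / (2 * M)) * norm u"
        using elim(2) M(1) by (intro add_left_mono mult_right_mono mult_left_mono) auto
      finally show ?thesis using M(1) by simp
    qed
    have "inj (L y)"
      unfolding linear_inj_iff_eq_0[OF lin]
    proof (intro allI impI)
      fix u assume "L y u = 0"
      then show "u = 0" using lower[of u] by simp
    qed
    then have bij_y: "bij (L y)"
      using linear_injective_imp_surjective[OF lin] by (simp add: bij_def)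
    have "norm (inv (L y) w - inv (L x) w) \<le> (2 * M * M * c) * norm (y - x) * norm w" for w
    proof -
      define v where "v = inv (L x) w"
      have "L y (inv (L y) w - inv (L x) w) = L x v - L y v"
        using bij bij_y by (simp add: v_def linear_diff[OF lin] bij_is_surj surj_f_inv_f)
      then have "norm (inv (L y) w - inv (L x) w) \<le> 2 * M * norm (L x v - L y v)"
        using lower[of "inv (L y) w - inv (L x) w"] by simp
      also have "\<dots> \<le> 2 * M * (c * norm (y - x) * norm v)"
        using elim(1) M(1) by (intro mult_left_mono) (auto simp: norm_minus_commute)
      also have "\<dots> \<le> 2 * M * (c * norm (y - x) * (M * norm w))"
        using M \<open>0 \<le> c\<close> by (intro mult_left_mono) (auto simp: v_def)
      finally show ?thesis by (simp add: mult_ac)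
    qed
    with bij_y show ?case by blast
  qed
  then show ?thesis by blast
qed

lemma has_field_derivative_along_line:
  assumes "(g has_derivative g') (at (p + s *\<^sub>R a))"
  shows "((\<lambda>s. g (p + s *\<^sub>R a)) has_real_derivative g' a) (at s)"
proof -
  have "((\<lambda>s. p + s *\<^sub>R a) has_derivative (\<lambda>h. h *\<^sub>R a)) (at s)"
    by (intro derivative_eq_intros) auto
  from has_derivative_compose[OF this assms]
  have "((\<lambda>s. g (p + s *\<^sub>R a)) has_derivative (\<lambda>h. g' (h *\<^sub>R a))) (at s)" .
  moreover have "(\<lambda>h. g' (h *\<^sub>R a)) = (*) (g' a)"
    using linear_scale[OF has_derivative_linear[OF assms]] by (auto simp: fun_eq_iff mult.commute)
  ultimately show ?thesis by (simp add: has_field_derivative_def)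
qed

lemma second_difference_mean_value:
  fixes g :: "'a::real_normed_vector \<Rightarrow> real"
  assumes t: "t > 0"
    and inU: "\<And>s r. 0 \<le> s \<Longrightarrow> s \<le> t \<Longrightarrow> 0 \<le> r \<Longrightarrow> r \<le> t \<Longrightarrow> x + s *\<^sub>R a + r *\<^sub>R c \<in> U"
    and g: "\<And>y. y \<in> U \<Longrightarrow> (g has_derivative g' y) (at y)"
    and H: "\<And>y. y \<in> U \<Longrightarrow> ((\<lambda>y. g' y a) has_derivative H y) (at y)"
  shows "\<exists>s r. 0 < s \<and> s < t \<and> 0 < r \<and> r < t \<and>
     g (x + t *\<^sub>R a + t *\<^sub>R c) - g (x + t *\<^sub>R a) - g (x + t *\<^sub>R c) + g x
       = t * t * H (x + s *\<^sub>R a + r *\<^sub>R c) c"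
proof -
  define \<phi> where "\<phi> s = g ((x + t *\<^sub>R c) + s *\<^sub>R a) - g (x + s *\<^sub>R a)" for s
  have d\<phi>: "(\<phi> has_real_derivative g' ((x + t *\<^sub>R c) + s *\<^sub>R a) a - g' (x + s *\<^sub>R a) a) (at s)"
    if "0 \<le> s" "s \<le> t" for s
    unfolding \<phi>_def
    using inU[of s t] inU[of s 0] that t
    by (intro DERIV_diff has_field_derivative_along_line g) (simp_all add: add_ac)
  obtain s where s: "0 < s" "s < t"
    and \<phi>: "\<phi> t - \<phi> 0 = t * (g' ((x + t *\<^sub>R c) + s *\<^sub>R a) a - g' (x + s *\<^sub>R a) a)"
    using MVT2[OF t d\<phi>] by auto
  define \<psi> where "\<psi> r = g' ((x + s *\<^sub>R a) + r *\<^sub>R c) a" for r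
  have d\<psi>: "(\<psi> has_real_derivative H ((x + s *\<^sub>R a) + r *\<^sub>R c) c) (at r)" if "0 \<le> r" "r \<le> t" for r
    unfolding \<psi>_def using inU[of s r] that s
    by (intro has_field_derivative_along_line H) simp
  obtain r where r: "0 < r" "r < t" and \<psi>: "\<psi> t - \<psi> 0 = t * H ((x + s *\<^sub>R a) + r *\<^sub>R c) c"
    using MVT2[OF t d\<psi>] by auto
  have "g (x + t *\<^sub>R a + t *\<^sub>R c) - g (x + t *\<^sub>R a) - g (x + t *\<^sub>R c) + g x = \<phi> t - \<phi> 0"
    by (simp add: \<phi>_def add_ac)
  also have "\<dots> = t * (\<psi> t - \<psi> 0)" using \<phi> by (simp add: \<psi>_def add_ac)
  also have "\<dots> = t * t * H (x + s *\<^sub>R a + r *\<^sub>R c) c" using \<psi> by simp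
  finally show ?thesis using s r by blast
qed

lemma second_derivative_symmetric_real:
  fixes g :: "'a::real_normed_vector \<Rightarrow> real"
  assumes U: "open U" and x: "x \<in> U"
    and g: "\<And>y. y \<in> U \<Longrightarrow> (g has_derivative g' y) (at y)"
    and Ha: "\<And>y. y \<in> U \<Longrightarrow> ((\<lambda>y. g' y a) has_derivative Ha y) (at y)"
    and Hc: "\<And>y. y \<in> U \<Longrightarrow> ((\<lambda>y. g' y c) has_derivative Hc y) (at y)"
    and cont_a: "isCont (\<lambda>y. Ha y c) x" and cont_c: "isCont (\<lambda>y. Hc y a) x"
  shows "Ha x c = Hc x a"
proof (rule ccontr)
  assume "Ha x c \<noteq> Hc x a"
  then have \<delta>: "\<bar>Ha x c - Hc x a\<bar> / 2 > 0" by simp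
  obtain e where e: "e > 0" "ball x e \<subseteq> U"
    and close_a: "\<And>y. dist y x < e \<Longrightarrow> \<bar>Ha y c - Ha x c\<bar> < \<bar>Ha x c - Hc x a\<bar> / 2"
    and close_c: "\<And>y. dist y x < e \<Longrightarrow> \<bar>Hc y a - Hc x a\<bar> < \<bar>Ha x c - Hc x a\<bar> / 2"
  proof -
    obtain e1 where "e1 > 0" "\<And>y. dist y x < e1 \<Longrightarrow> \<bar>Ha y c - Ha x c\<bar> < \<bar>Ha x c - Hc x a\<bar> / 2"
      using cont_a \<delta> unfolding continuous_at_eps_delta dist_real_def by blast
    moreover obtain e2 where "e2 > 0" "\<And>y. dist y x < e2 \<Longrightarrow> \<bar>Hc y a - Hc x a\<bar> < \<bar>Ha x c - Hc x a\<bar> / 2"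
      using cont_c \<delta> unfolding continuous_at_eps_delta dist_real_def by blast
    moreover obtain e3 where "e3 > 0" "ball x e3 \<subseteq> U" using U x open_contains_ball by blast
    ultimately show ?thesis
      by (intro that[of "min e1 (min e2 e3)"]) auto
  qed
  have D: "0 < norm a + norm c + 1"
    using norm_ge_zero[of a] norm_ge_zero[of c] by linarith
  define t where "t = e / (2 * (norm a + norm c + 1))"
  have t: "t > 0" using e D by (simp add: t_def)
  have near: "dist (x + s *\<^sub>R a + r *\<^sub>R c) x < e" if "0 \<le> s" "s \<le> t" "0 \<le> r" "r \<le> t" for s r
  proof -
    have "norm (s *\<^sub>R a + r *\<^sub>R c) \<le> t * (norm a + norm c)"
      using norm_triangle_ineq[of "s *\<^sub>R a" "r *\<^sub>R c"] that
        mult_right_mono[of s t "norm a"] mult_right_mono[of r t "norm c"]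
      by (simp add: distrib_left)
    also have "\<dots> < t * (2 * (norm a + norm c + 1))"
      using t D by (intro mult_strict_left_mono) simp_all
    also have "\<dots> = e"
      using D by (simp add: t_def)
    finally show ?thesis by (simp add: dist_norm add.assoc)
  qed
  have inU: "x + s *\<^sub>R a + r *\<^sub>R c \<in> U" "x + r *\<^sub>R c + s *\<^sub>R a \<in> U"
    if "0 \<le> s" "s \<le> t" "0 \<le> r" "r \<le> t" for s r
    using near[OF that] e(2) by (auto simp: dist_commute add_ac)
  obtain s1 r1 where sr1: "0 < s1" "s1 < t" "0 < r1" "r1 < t" and
    E1: "g (x + t *\<^sub>R a + t *\<^sub>R c) - g (x + t *\<^sub>R a) - g (x + t *\<^sub>R c) + g x
           = t * t * Ha (x + s1 *\<^sub>R a + r1 *\<^sub>R c) c"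
    using second_difference_mean_value[OF t inU(1) g Ha] by blast
  obtain s2 r2 where sr2: "0 < s2" "s2 < t" "0 < r2" "r2 < t" and
    E2: "g (x + t *\<^sub>R c + t *\<^sub>R a) - g (x + t *\<^sub>R c) - g (x + t *\<^sub>R a) + g x
           = t * t * Hc (x + s2 *\<^sub>R c + r2 *\<^sub>R a) a"
    using second_difference_mean_value[OF t inU(2) g Hc] by blast
  have "x + t *\<^sub>R a + t *\<^sub>R c = x + t *\<^sub>R c + t *\<^sub>R a" by (simp add: add_ac)
  then have "t * t * Ha (x + s1 *\<^sub>R a + r1 *\<^sub>R c) c = t * t * Hc (x + s2 *\<^sub>R c + r2 *\<^sub>R a) a"
    using E1 E2 by (simp only:)
  then have "Ha (x + s1 *\<^sub>R a + r1 *\<^sub>R c) c = Hc (x + s2 *\<^sub>R c + r2 *\<^sub>R a) a"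
    using t by simp
  moreover have "\<bar>Ha (x + s1 *\<^sub>R a + r1 *\<^sub>R c) c - Ha x c\<bar> < \<bar>Ha x c - Hc x a\<bar> / 2"
    using close_a near[of s1 r1] sr1 by simp
  moreover have "\<bar>Hc (x + s2 *\<^sub>R c + r2 *\<^sub>R a) a - Hc x a\<bar> < \<bar>Ha x c - Hc x a\<bar> / 2"
    using close_c near[of r2 s2] sr2 by (simp add: add_ac)
  ultimately show False by (simp add: abs_less_iff abs_if split: if_splits)
qed

lemma frechet_derivative_symmetric:
  fixes f :: "'a::real_normed_vector \<Rightarrow> 'b::euclidean_space"
  assumes U: "open U" and x: "x \<in> U" and f: "Ck_on 2 U f"
  shows "frechet_derivative (\<lambda>y. frechet_derivative f (at y) a) (at x) c
       = frechet_derivative (\<lambda>y. frechet_derivative f (at y) c) (at x) a"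
proof (rule euclidean_eqI)
  fix k :: 'b
  have f1: "Ck_on (Suc 0) U (\<lambda>y. frechet_derivative f (at y) h)" for h
    using f by (simp add: numeral_2_eq_2)
  have "(f has_derivative frechet_derivative f (at y)) (at y)" if "y \<in> U" for y
    using f U that by (intro Ck_on_has_derivative[of 1]) (simp_all add: numeral_2_eq_2)
  moreover have "((\<lambda>y. frechet_derivative f (at y) h) has_derivative
      frechet_derivative (\<lambda>y. frechet_derivative f (at y) h) (at y)) (at y)" if "y \<in> U" for y h
    using Ck_on_has_derivative[OF f1 U that] .
  moreover have "isCont (\<lambda>y. frechet_derivative (\<lambda>y. frechet_derivative f (at y) h) (at y) h' \<bullet> k) x"
    for h h'
    using Ck_on_frechet_derivative[OF f1[of h], of h'] U x
    by (simp add: continuous_on_eq_continuous_at continuous_intros)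
  ultimately show "frechet_derivative (\<lambda>y. frechet_derivative f (at y) a) (at x) c \<bullet> k =
        frechet_derivative (\<lambda>y. frechet_derivative f (at y) c) (at x) a \<bullet> k"
    by (intro second_derivative_symmetric_real[OF U x, where g="\<lambda>y. f y \<bullet> k"
          and g'="\<lambda>y h. frechet_derivative f (at y) h \<bullet> k"] has_derivative_inner_left)
qed

lemma has_derivative_Dflat:
  fixes v w :: "'v::euclidean_space \<Rightarrow> 'v"
  assumes U: "open U" and x: "x \<in> U" and w: "Ck_on 2 U w" and v: "(v has_derivative v') (at x)"
  shows "(Dflat v w has_derivative
      (\<lambda>h. frechet_derivative w (at x) (v' h)
         + frechet_derivative (\<lambda>y. frechet_derivative w (at y) (v x)) (at x) h)) (at x)"
proof -
  define H where "H i = frechet_derivative (\<lambda>y. frechet_derivative w (at y) i) (at x)" for i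
  have w1: "Ck_on (Suc 0) U (\<lambda>y. frechet_derivative w (at y) h)" for h
    using w by (simp add: numeral_2_eq_2)
  have dw: "w differentiable (at y)" if "y \<in> U" for y
    using w U that by (simp add: numeral_2_eq_2 differentiable_on_eq_differentiable_at)
  have H: "((\<lambda>y. frechet_derivative w (at y) i) has_derivative H i) (at x)" for i
    unfolding H_def using Ck_on_has_derivative[OF w1 U x] .
  have expand: "frechet_derivative w (at y) p = (\<Sum>i\<in>Basis. (p \<bullet> i) *\<^sub>R frechet_derivative w (at y) i)"
    if "y \<in> U" for y p
    using dw[OF that] frechet_derivative_works has_derivative_linear linear_Basis_expansion by blast
  have "((\<lambda>y. \<Sum>i\<in>Basis. (v x \<bullet> i) *\<^sub>R frechet_derivative w (at y) i) has_derivative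
      (\<lambda>h. \<Sum>i\<in>Basis. (v x \<bullet> i) *\<^sub>R H i h)) (at x)"
    by (intro has_derivative_sum has_derivative_scaleR_right H)
  then have "((\<lambda>y. frechet_derivative w (at y) (v x)) has_derivative
      (\<lambda>h. \<Sum>i\<in>Basis. (v x \<bullet> i) *\<^sub>R H i h)) (at x)"
    using U x by (rule has_derivative_transform_within_open) (simp add: expand[symmetric])
  then have second: "frechet_derivative (\<lambda>y. frechet_derivative w (at y) (v x)) (at x) h
      = (\<Sum>i\<in>Basis. (v x \<bullet> i) *\<^sub>R H i h)" for h
    by (rule frechet_derivative_apply)
  have "((\<lambda>y. \<Sum>i\<in>Basis. (v y \<bullet> i) *\<^sub>R frechet_derivative w (at y) i) has_derivative
      (\<lambda>h. \<Sum>i\<in>Basis. (v x \<bullet> i) *\<^sub>R H i h + (v' h \<bullet> i) *\<^sub>R frechet_derivative w (at x) i)) (at x)"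
    by (intro has_derivative_sum has_derivative_scaleR has_derivative_inner_left v H)
  then have "(Dflat v w has_derivative
      (\<lambda>h. \<Sum>i\<in>Basis. (v x \<bullet> i) *\<^sub>R H i h + (v' h \<bullet> i) *\<^sub>R frechet_derivative w (at x) i)) (at x)"
    using U x by (rule has_derivative_transform_within_open) (simp add: Dflat_Basis_expansion dw)
  then show ?thesis
    by (simp add: sum.distrib second expand[OF x, symmetric] add.commute)
qed

definition neg_definite_on :: "('v::euclidean_space \<Rightarrow> 'v \<Rightarrow> real) \<Rightarrow> 'v set \<Rightarrow> bool" where
  "neg_definite_on q W \<longleftrightarrow> subspace W \<and> (\<forall>w\<in>W. w \<noteq> 0 \<longrightarrow> q w w < 0)"

lemma
  fixes q :: "'v::euclidean_space \<Rightarrow> 'v \<Rightarrow> real"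
  shows neg_index_attained: "\<exists>W. neg_definite_on q W \<and> dim W = neg_index q"
    and neg_index_ge: "neg_definite_on q W \<Longrightarrow> dim W \<le> neg_index q"
proof -
  let ?S = "{dim W | W. subspace W \<and> (\<forall>w\<in>W. w \<noteq> 0 \<longrightarrow> q w w < 0)}"
  have "?S \<subseteq> {..DIM('v)}" using dim_subset_UNIV by fastforce
  then have fin: "finite ?S" using finite_subset by blast
  have "0 \<in> ?S" using subspace_0 by (intro CollectI exI[of _ "{0::'v}"]) auto
  then have "Max ?S \<in> ?S" using Max_in[OF fin] by blast
  then show "\<exists>W. neg_definite_on q W \<and> dim W = neg_index q"
    unfolding neg_index_def neg_definite_on_def by auto
  show "neg_definite_on q W \<Longrightarrow> dim W \<le> neg_index q"
    unfolding neg_index_def neg_definite_on_def by (rule Max_ge[OF fin]) auto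
qed

lemma neg_definite_on_uniform:
  fixes q :: "'v::euclidean_space \<Rightarrow> 'v \<Rightarrow> real"
  assumes q: "bilinear q" and W: "neg_definite_on q W"
  shows "\<exists>c>0. \<forall>w\<in>W. q w w \<le> - c * (norm w)\<^sup>2"
proof -
  have sub: "subspace W" using W by (simp add: neg_definite_on_def)
  let ?S = "sphere 0 1 \<inter> W"
  have homog: "q w w = (norm w)\<^sup>2 * q (w /\<^sub>R norm w) (w /\<^sub>R norm w)" if "w \<noteq> 0" for w
    using that by (simp add: bilinear_lmul[OF q] bilinear_rmul[OF q] power2_eq_square field_simps)
  have sphere: "w /\<^sub>R norm w \<in> ?S" if "w \<in> W" "w \<noteq> 0" for w
    using that sub by (simp add: subspace_scale)
  show ?thesis
  proof (cases "?S = {}")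
    case True
    then have "W \<subseteq> {0}" using sphere by blast
    then show ?thesis by (intro exI[of _ 1]) (auto simp: bilinear_lzero[OF q])
  next
    case False
    have "compact ?S" by (rule compact_Int_closed[OF compact_sphere closed_subspace[OF sub]])
    moreover have "continuous_on ?S (\<lambda>w. q w w)"
      by (intro bilinear_continuous_on_compose[OF continuous_on_id continuous_on_id q])
    ultimately obtain w0 where w0: "w0 \<in> ?S" "\<And>w. w \<in> ?S \<Longrightarrow> q w w \<le> q w0 w0"
      using continuous_attains_sup[of ?S "\<lambda>w. q w w"] False by blast
    have "q w w \<le> - (- q w0 w0) * (norm w)\<^sup>2" if "w \<in> W" for w
    proof (cases "w = 0")
      case True
      then show ?thesis by (simp add: bilinear_lzero[OF q])
    next
      case False
      have "(norm w)\<^sup>2 * q (w /\<^sub>R norm w) (w /\<^sub>R norm w) \<le> (norm w)\<^sup>2 * q w0 w0"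
        using w0(2)[OF sphere[OF that False]] by (rule mult_left_mono) simp
      then show ?thesis
        using homog[OF False] by (simp add: mult.commute)
    qed
    moreover have "q w0 w0 < 0" using W w0(1) by (auto simp: neg_definite_on_def)
    ultimately show ?thesis by (intro exI[of _ "- q w0 w0"]) auto
  qed
qed

lemma subspace_sum_eq_UNIV:
  fixes W P :: "'v::euclidean_space set"
  assumes "subspace W" "subspace P" "W \<inter> P \<subseteq> {0}" "DIM('v) \<le> dim W + dim P"
  shows "\<exists>w p. v = w + p \<and> w \<in> W \<and> p \<in> P"
proof -
  let ?S = "{w + p |w p. w \<in> W \<and> p \<in> P}"
  have "dim ?S + dim (W \<inter> P) = dim W + dim P"
    by (rule dim_sums_Int[OF assms(1,2)])
  moreover have "dim (W \<inter> P) = 0" using assms(3) by (simp add: dim_eq_0)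
  ultimately have "dim ?S = DIM('v)"
    using dim_subset_UNIV[of ?S] assms(4) by linarith
  then have "span ?S = UNIV" by (simp add: dim_eq_full)
  moreover have "span ?S = ?S"
    using subspace_sums[OF assms(1,2)] by (simp add: set_plus_def span_eq_iff)
  ultimately have "v \<in> ?S" by simp
  then show ?thesis by blast
qed

lemma dim_form_orthogonal_ge:
  fixes q :: "'v::euclidean_space \<Rightarrow> 'v \<Rightarrow> real"
  assumes q: "bilinear q" and W: "subspace W"
  shows "DIM('v) \<le> dim {p. \<forall>w\<in>W. q p w = 0} + dim W"
proof -
  define R where "R w = (\<Sum>i\<in>Basis. q i w *\<^sub>R i)" for w :: 'v
  have "q p w = p \<bullet> R w" for p w
    using linear_Basis_expansion[of "\<lambda>p. q p w" p] q
    by (simp add: bilinear_def R_def inner_sum_right mult.commute)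
  then have orth: "{p. \<forall>w\<in>W. q p w = 0} = {y \<in> UNIV. \<forall>z \<in> R ` W. orthogonal z y}"
    by (auto simp: orthogonal_def inner_commute)
  have R: "linear R"
    unfolding R_def using q
    by (intro linearI)
      (simp_all add: bilinear_radd bilinear_rmul scaleR_add_left sum.distrib scaleR_sum_right)
  have "dim {p. \<forall>w\<in>W. q p w = 0} + dim (R ` W) = DIM('v)"
    unfolding orth
    using dim_subspace_orthogonal_to_vectors[OF linear_subspace_image[OF R W] subspace_UNIV] by simp
  with dim_image_le[OF R, of W] show ?thesis by linarith
qed

lemma psd_isotropic_orthogonal:
  fixes q :: "'v::real_vector \<Rightarrow> 'v \<Rightarrow> real"
  assumes q: "bilinear q" "sym_form q" and P: "subspace P" and psd: "\<And>p. p \<in> P \<Longrightarrow> 0 \<le> q p p"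
    and p: "p \<in> P" "q p p = 0" and p': "p' \<in> P"
  shows "q p p' = 0"
proof (rule ccontr)
  define a c where "a = q p p'" and "c = q p' p'"
  define t where "t = - a / (c + 1)"
  assume "q p p' \<noteq> 0"
  then have "a \<noteq> 0" by (simp add: a_def)
  have "0 \<le> c" using psd[OF p'] by (simp add: c_def)
  have "q (p + t *\<^sub>R p') (p + t *\<^sub>R p') = t * (2 * a + t * c)"
    using q p(2) by (simp add: a_def c_def bilinear_ladd bilinear_radd bilinear_lmul bilinear_rmul
        sym_form_def algebra_simps)
  also have "\<dots> = - ((a * a) * (c + 2) / ((c + 1) * (c + 1)))"
    using \<open>0 \<le> c\<close> by (simp add: t_def field_simps)
  also have "\<dots> < 0"
  proof -
    have "0 < a * a" using \<open>a \<noteq> 0\<close> by (metis not_real_square_gt_zero)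
    then have "0 < (a * a) * (c + 2) / ((c + 1) * (c + 1))"
      using \<open>0 \<le> c\<close> by (intro divide_pos_pos mult_pos_pos[of "a * a"]) auto
    then show ?thesis by simp
  qed
  finally show False
    using psd[of "p + t *\<^sub>R p'"] P p p' by (simp add: subspace_add subspace_scale)
qed

lemma neg_definite_on_Int:
  "neg_definite_on q W \<Longrightarrow> neg_definite_on (\<lambda>u v. - q u v) P \<Longrightarrow> W \<inter> P \<subseteq> {0}"
  by (force simp: neg_definite_on_def)

lemma neg_index_add_le_DIM:
  fixes q :: "'v::euclidean_space \<Rightarrow> 'v \<Rightarrow> real"
  shows "neg_index q + neg_index (\<lambda>u v. - q u v) \<le> DIM('v)"
proof -
  obtain W where W: "neg_definite_on q W" "dim W = neg_index q"
    using neg_index_attained by blast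
  obtain P where P: "neg_definite_on (\<lambda>u v. - q u v) P" "dim P = neg_index (\<lambda>u v. - q u v)"
    using neg_index_attained by blast
  have "subspace W" "subspace P" using W P by (auto simp: neg_definite_on_def)
  then have "dim {w + p |w p. w \<in> W \<and> p \<in> P} + dim (W \<inter> P) = dim W + dim P"
    by (rule dim_sums_Int)
  moreover have "dim (W \<inter> P) = 0"
    using neg_definite_on_Int[OF W(1) P(1)] by (simp add: dim_eq_0)
  ultimately show ?thesis
    using dim_subset_UNIV[of "{w + p |w p. w \<in> W \<and> p \<in> P}"] W(2) P(2) by linarith
qed

lemma neg_index_orthogonal_nonneg:
  fixes q :: "'v::euclidean_space \<Rightarrow> 'v \<Rightarrow> real"
  assumes q: "bilinear q" "sym_form q" and W: "neg_definite_on q W" "dim W = neg_index q"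
    and p: "\<forall>w\<in>W. q p w = 0"
  shows "0 \<le> q p p"
proof (rule ccontr)
  assume neg: "\<not> 0 \<le> q p p"
  have sW: "subspace W" using W(1) by (simp add: neg_definite_on_def)
  then have span_W: "span W = W" by (simp add: span_eq_iff)
  have "p \<notin> W" using p neg by auto
  then have "dim (span (insert p W)) = dim W + 1"
    by (simp add: span_W dim_span dim_insert)
  moreover have "neg_definite_on q (span (insert p W))"
    unfolding neg_definite_on_def
  proof (intro conjI ballI impI subspace_span)
    fix y assume "y \<in> span (insert p W)" "y \<noteq> 0"
    then obtain t where "y - t *\<^sub>R p \<in> W"
      using span_W by (auto simp: span_insert)
    define w where "w = y - t *\<^sub>R p"
    have w: "w \<in> W" and y: "y = w + t *\<^sub>R p"
      using \<open>y - t *\<^sub>R p \<in> W\<close> by (simp_all add: w_def)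
    have "q p w = 0" using p w by simp
    moreover have "q w p = 0" using calculation q(2) unfolding sym_form_def by metis
    ultimately have "q y y = q w w + t * t * q p p"
      unfolding y
      by (simp add: bilinear_ladd[OF q(1)] bilinear_radd[OF q(1)] bilinear_lmul[OF q(1)]
          bilinear_rmul[OF q(1)])
    moreover have "q w w \<le> 0"
      using W(1) w by (cases "w = 0") (auto simp: neg_definite_on_def bilinear_lzero[OF q(1)])
    moreover have "t * t * q p p \<le> 0"
      using neg by (simp add: mult_nonneg_nonpos)
    moreover have "q w w < 0 \<or> t * t * q p p < 0"
    proof (cases "w = 0")
      case True
      then have "t \<noteq> 0" using \<open>y \<noteq> 0\<close> y by auto
      then have "0 < t * t" by (metis not_real_square_gt_zero)
      then show ?thesis using neg by (simp add: mult_pos_neg)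
    next
      case False
      then show ?thesis using W(1) w by (simp add: neg_definite_on_def)
    qed
    ultimately show "q y y < 0" by linarith
  qed
  ultimately show False
    using neg_index_ge[of q "span (insert p W)"] W(2) by linarith
qed

text \<open>Sylvester: for a nondegenerate form, the q-orthogonal complement of a maximal negative
  definite subspace is positive definite.\<close>

lemma DIM_le_neg_index_add:
  fixes q :: "'v::euclidean_space \<Rightarrow> 'v \<Rightarrow> real"
  assumes q: "bilinear q" "sym_form q" and nondeg: "nondegenerate q"
  shows "DIM('v) \<le> neg_index q + neg_index (\<lambda>u v. - q u v)"
proof -
  obtain W where W: "neg_definite_on q W" "dim W = neg_index q"
    using neg_index_attained by blast
  have sW: "subspace W" using W by (simp add: neg_definite_on_def)
  define P where "P = {p. \<forall>w\<in>W. q p w = 0}"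
  have sP: "subspace P"
    unfolding P_def subspace_def
    by (auto simp: bilinear_lzero[OF q(1)] bilinear_ladd[OF q(1)] bilinear_lmul[OF q(1)])
  have dimP: "DIM('v) \<le> dim W + dim P"
    using dim_form_orthogonal_ge[OF q(1) sW] by (simp add: P_def)
  have WP: "W \<inter> P \<subseteq> {0}"
    using W(1) unfolding P_def neg_definite_on_def by force
  have psd: "0 \<le> q p p" if "p \<in> P" for p
    using neg_index_orthogonal_nonneg[OF q W] that by (simp add: P_def)
  have "0 < q p p" if "p \<in> P" "p \<noteq> 0" for p
  proof (rule ccontr)
    assume "\<not> 0 < q p p"
    then have "q p p = 0" using psd[OF that(1)] by simp
    have "q p v = 0" for v
    proof -
      obtain w p' where "v = w + p'" "w \<in> W" "p' \<in> P"
        using subspace_sum_eq_UNIV[OF sW sP WP dimP] by blast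
      moreover have "q p w = 0" using that(1) \<open>w \<in> W\<close> by (simp add: P_def)
      moreover have "q p p' = 0"
        using psd_isotropic_orthogonal[OF q sP psd that(1) \<open>q p p = 0\<close> \<open>p' \<in> P\<close>] .
      ultimately show ?thesis by (simp add: bilinear_radd[OF q(1)])
    qed
    then show False using nondeg that(2) by (simp add: nondegenerate_def)
  qed
  then have "neg_definite_on (\<lambda>u v. - q u v) P"
    using sP by (simp add: neg_definite_on_def)
  then have "dim P \<le> neg_index (\<lambda>u v. - q u v)" by (rule neg_index_ge)
  then show ?thesis using dimP W(2) by linarith
qed

lemma neg_definite_on_perturb:
  fixes q q' :: "'v::euclidean_space \<Rightarrow> 'v \<Rightarrow> real"
  assumes "subspace W" and "e < c"
    and q: "\<And>w. w \<in> W \<Longrightarrow> q w w \<le> - c * (norm w)\<^sup>2"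
    and close: "\<And>w. w \<in> W \<Longrightarrow> \<bar>q' w w - q w w\<bar> \<le> e * (norm w)\<^sup>2"
  shows "neg_definite_on q' W"
  unfolding neg_definite_on_def
proof (intro conjI ballI impI \<open>subspace W\<close>)
  fix w assume "w \<in> W" "w \<noteq> 0"
  then have "e * (norm w)\<^sup>2 < c * (norm w)\<^sup>2" using \<open>e < c\<close> by simp
  then show "q' w w < 0"
    using q[OF \<open>w \<in> W\<close>] close[OF \<open>w \<in> W\<close>] unfolding abs_le_iff by linarith
qed

lemma neg_index_locally_constant:
  fixes q :: "'a::metric_space \<Rightarrow> 'v::euclidean_space \<Rightarrow> 'v \<Rightarrow> real"
  assumes qx: "bilinear (q x)" "sym_form (q x)" "nondegenerate (q x)"
    and cont: "\<And>e. e > 0 \<Longrightarrow>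
      eventually (\<lambda>y. \<forall>u v. \<bar>q y u v - q x u v\<bar> \<le> e * norm u * norm v) (nhds x)"
  shows "eventually (\<lambda>y. neg_index (q y) = neg_index (q x)) (nhds x)"
proof -
  obtain W where W: "neg_definite_on (q x) W" "dim W = neg_index (q x)"
    using neg_index_attained by blast
  obtain P where P: "neg_definite_on (\<lambda>u v. - q x u v) P" "dim P = neg_index (\<lambda>u v. - q x u v)"
    using neg_index_attained by blast
  obtain c1 where c1: "c1 > 0" "\<And>w. w \<in> W \<Longrightarrow> q x w w \<le> - c1 * (norm w)\<^sup>2"
    using neg_definite_on_uniform[OF qx(1) W(1)] by blast
  obtain c2 where c2: "c2 > 0" "\<And>w. w \<in> P \<Longrightarrow> - q x w w \<le> - c2 * (norm w)\<^sup>2"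
    using neg_definite_on_uniform[OF _ P(1)] qx(1) by (auto simp: bilinear_def linear_compose_neg)
  have "min c1 c2 / 2 > 0" using c1 c2 by simp
  from cont[OF this] show ?thesis
  proof eventually_elim
    case (elim y)
    have close: "\<bar>q y w w - q x w w\<bar> \<le> min c1 c2 / 2 * (norm w)\<^sup>2" for w
      using elim by (simp add: power2_eq_square mult.assoc)
    have "neg_definite_on (q y) W"
      using W(1) c1 close
      by (intro neg_definite_on_perturb[where e="min c1 c2 / 2" and c=c1 and q="q x"])
        (auto simp: neg_definite_on_def)
    moreover have "neg_definite_on (\<lambda>u v. - q y u v) P"
      using P(1) c2 close
      by (intro neg_definite_on_perturb[where e="min c1 c2 / 2" and c=c2 and q="\<lambda>u v. - q x u v"])
        (auto simp: neg_definite_on_def abs_minus_commute)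
    ultimately have "neg_index (q x) \<le> neg_index (q y)"
      "neg_index (\<lambda>u v. - q x u v) \<le> neg_index (\<lambda>u v. - q y u v)"
      using neg_index_ge W(2) P(2) by fastforce+
    then show ?case
      using neg_index_add_le_DIM[of "q y"] DIM_le_neg_index_add[OF qx] by linarith
  qed
qed

text \<open>Uniqueness of the Levi-Civita connection: the difference of two torsion-free metric
  connections is symmetric in its two arguments and, paired with g, skew in the last two; a
  tensor with both symmetries vanishes.\<close>

lemma levi_civita_unique:
  assumes L1: "levi_civita U g nabla1" and L2: "levi_civita U g nabla2"
    and g: "\<And>x. x \<in> U \<Longrightarrow> bilinear (g x) \<and> sym_form (g x) \<and> nondegenerate (g x)"
    and u: "u \<in> vfields U" and v: "v \<in> vfields U" and x: "x \<in> U"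
  shows "nabla1 u v x = nabla2 u v x"
proof -
  define A where "A p q = nabla1 p q x - nabla2 p q x" for p q
  define T where "T p q r = g x (A p q) (r x)" for p q r
  have gx: "bilinear (g x)" and g_sym: "g x a c = g x c a" for a c
    using g[OF x] by (simp_all add: sym_form_def)
  have sym: "T p q r = T q p r" if "p \<in> vfields U" "q \<in> vfields U" for p q r
  proof -
    have "nabla1 p q x - nabla1 q p x = lie p q x"
      using L1 that x unfolding levi_civita_def by blast
    moreover have "nabla2 p q x - nabla2 q p x = lie p q x"
      using L2 that x unfolding levi_civita_def by blast
    ultimately have "A p q = A q p" unfolding A_def by (simp add: algebra_simps)
    then show ?thesis by (simp add: T_def)
  qed
  have skew: "T p q r = - T p r q" if "p \<in> vfields U" "q \<in> vfields U" "r \<in> vfields U" for p q r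
  proof -
    have "Dir (\<lambda>y. g y (q y) (r y)) x (p x) = g x (nabla1 p q x) (r x) + g x (q x) (nabla1 p r x)"
      using L1 that x unfolding levi_civita_def by blast
    moreover have "Dir (\<lambda>y. g y (q y) (r y)) x (p x) = g x (nabla2 p q x) (r x) + g x (q x) (nabla2 p r x)"
      using L2 that x unfolding levi_civita_def by blast
    ultimately show ?thesis
      unfolding T_def A_def bilinear_lsub[OF gx] by (simp add: g_sym[of "q x"])
  qed
  have "T u v w = 0" if w: "w \<in> vfields U" for w
  proof -
    have "T u v w = - T v w u" using sym[OF u v] skew[OF v u w] by simp
    also have "\<dots> = T w u v" using sym[OF v w] skew[OF w v u] by simp
    also have "\<dots> = - T u v w" using sym[OF w u] skew[OF u w v] by simp
    finally show ?thesis by simp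
  qed
  moreover have "(\<lambda>y. e) \<in> vfields U" for e
    by (simp add: vfields_def smooth_fn_on_def Ck_on_const)
  ultimately have "g x (A u v) e = 0" for e
    unfolding T_def by (metis (no_types))
  then have "A u v = 0" using g[OF x] by (simp add: nondegenerate_def)
  then show ?thesis by (simp add: A_def)
qed

locale metric_jacobi_curvature =
  fixes b :: "'v::euclidean_space \<Rightarrow> 'v \<Rightarrow> real" and J :: "'v \<Rightarrow> 'v \<Rightarrow> 'v \<Rightarrow> 'v"
  assumes b_bilinear: "bilinear b" and b_sym: "sym_form b" and b_nondegenerate: "nondegenerate b"
    and J_metric_jacobi: "metric_jacobi b J"
begin

lemma J_PC: "PC J"
  using J_metric_jacobi by (simp add: metric_jacobi_def)

lemma J_sym: "J u v = J v u"
  using J_metric_jacobi by (simp add: metric_jacobi_def)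

lemma J_bianchi: "J u v w + J v w u + J w u v = 0"
  using J_metric_jacobi unfolding metric_jacobi_def by blast

lemma J_metric: "b (J u v w) x = b (J w x u) v"
  using J_metric_jacobi by (simp add: metric_jacobi_def)

lemma J_linear: "linear (J u v)"
  using PC_linear[OF J_PC] .

lemma J_bilinear: "bilinear (\<lambda>u v. J u v w)"
  using PC_bilinear[OF J_PC] .

abbreviation Ginv :: "'v \<Rightarrow> 'v \<Rightarrow> 'v" where
  "Ginv x \<equiv> inv (Gop J x)"

lemma Gop_linear: "linear (Gop J x)"
  unfolding Gop_def
  by (rule linearI) (simp_all add: linear_add[OF J_linear] linear_scale[OF J_linear] algebra_simps)

lemma Gop_zero: "Gop J 0 = id"
  by (simp add: Gop_def fun_eq_iff bilinear_lzero[OF J_bilinear])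

lemma zero_in_U_J: "0 \<in> U_J J"
  by (simp add: U_J_def Gop_zero)

lemma Ginv_zero: "Ginv 0 = id"
  by (simp add: Gop_zero inv_id)

lemma Ginv_linear: "x \<in> U_J J \<Longrightarrow> linear (Ginv x)"
  by (intro inj_linear_imp_inv_linear Gop_linear) (simp add: U_J_def bij_is_inj)

lemma Gop_Ginv: "x \<in> U_J J \<Longrightarrow> Gop J x (Ginv x w) = w"
  by (simp add: U_J_def bij_is_surj surj_f_inv_f)

lemma Ginv_Gop: "x \<in> U_J J \<Longrightarrow> Ginv x (Gop J x u) = u"
  by (simp add: U_J_def bij_is_inj inv_f_f)

lemma Gop_lipschitz:
  "\<exists>c\<ge>0. eventually (\<lambda>y. \<forall>u. norm (Gop J y u - Gop J x u) \<le> c * norm (y - x) * norm u) (nhds x)"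
proof -
  obtain K where K: "K \<ge> 0" "\<And>a c d. norm (J a c d) \<le> K * norm a * norm c * norm d"
    using PC_bounded[OF J_PC] by blast
  have "norm (Gop J y u - Gop J x u) \<le> (K * (2 * norm x + 1) / 3) * norm (y - x) * norm u"
    if "dist y x < 1" for y u
  proof -
    have "Gop J y u - Gop J x u = - (1/3) *\<^sub>R (J (y - x) y u + J x (y - x) u)"
      by (simp add: Gop_def bilinear_lsub[OF J_bilinear] bilinear_rsub[OF J_bilinear] algebra_simps)
    moreover have "norm (J (y - x) y u + J x (y - x) u)
        \<le> K * norm (y - x) * norm y * norm u + K * norm x * norm (y - x) * norm u"
      using K(2)[of "y - x" y u] K(2)[of x "y - x" u]
        norm_triangle_ineq[of "J (y - x) y u" "J x (y - x) u"] by linarith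
    ultimately have "norm (Gop J y u - Gop J x u) \<le> (1/3) * (K * norm (y - x) * norm y * norm u
        + K * norm x * norm (y - x) * norm u)"
      by simp
    also have "\<dots> = (K / 3) * norm (y - x) * (norm y + norm x) * norm u"
      by (simp add: algebra_simps)
    also have "\<dots> \<le> (K / 3) * norm (y - x) * (2 * norm x + 1) * norm u"
      using that norm_triangle_sub[of y x] K(1)
      by (intro mult_right_mono mult_left_mono) (auto simp: dist_norm)
    finally show ?thesis by (simp add: mult_ac)
  qed
  moreover have "eventually (\<lambda>y. dist y x < 1) (nhds x)"
    unfolding eventually_nhds_metric by (intro exI[of _ 1]) auto
  ultimately have "eventually (\<lambda>y. \<forall>u. norm (Gop J y u - Gop J x u)
      \<le> (K * (2 * norm x + 1) / 3) * norm (y - x) * norm u) (nhds x)"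
    by (auto elim: eventually_mono)
  moreover have "0 \<le> K * (2 * norm x + 1) / 3" using K(1) by simp
  ultimately show ?thesis by blast
qed

lemma Ginv_lipschitz:
  assumes "x \<in> U_J J"
  shows "\<exists>K. eventually (\<lambda>y. y \<in> U_J J
           \<and> (\<forall>w. norm (Ginv y w - Ginv x w) \<le> K * norm (y - x) * norm w)) (nhds x)"
proof -
  obtain c where c: "c \<ge> 0"
    "eventually (\<lambda>y. \<forall>u. norm (Gop J y u - Gop J x u) \<le> c * norm (y - x) * norm u) (nhds x)"
    using Gop_lipschitz by blast
  have "bij (Gop J x)" using assms by (simp add: U_J_def)
  from inverse_operator_family_lipschitz[of "Gop J", OF Gop_linear this c] show ?thesis
    unfolding U_J_def mem_Collect_eq .
qed

lemma eventually_in_U_J: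
  assumes "x \<in> U_J J"
  shows "eventually (\<lambda>y. y \<in> U_J J) (nhds x)"
proof -
  obtain K where "eventually (\<lambda>y. y \<in> U_J J
      \<and> (\<forall>w. norm (Ginv y w - Ginv x w) \<le> K * norm (y - x) * norm w)) (nhds x)"
    using Ginv_lipschitz[OF assms] ..
  then show ?thesis by (rule eventually_mono) (rule conjunct1)
qed

lemma open_U_J: "open (U_J J)"
proof (rule open_subopen[THEN iffD2], rule ballI)
  fix x assume "x \<in> U_J J"
  then obtain T where "open T" "x \<in> T" "\<forall>y\<in>T. y \<in> U_J J"
    using eventually_in_U_J[of x] unfolding eventually_nhds by blast
  then show "\<exists>T. open T \<and> x \<in> T \<and> T \<subseteq> U_J J" by blast
qed

lemma Ginv_lipschitz_at:
  assumes "x \<in> U_J J"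
  obtains K where "eventually (\<lambda>y. \<forall>w. norm (Ginv y w - Ginv x w) \<le> K * norm (y - x) * norm w) (at x)"
proof -
  obtain K where "eventually (\<lambda>y. y \<in> U_J J
      \<and> (\<forall>w. norm (Ginv y w - Ginv x w) \<le> K * norm (y - x) * norm w)) (nhds x)"
    using Ginv_lipschitz[OF assms] ..
  then have "eventually (\<lambda>y. \<forall>w. norm (Ginv y w - Ginv x w) \<le> K * norm (y - x) * norm w) (at x)"
    unfolding eventually_at_filter by (rule eventually_mono) (intro impI, erule conjunct2)
  then show thesis by (rule that)
qed

lemma has_derivative_Ginv_apply:
  assumes x: "x \<in> U_J J" and z: "(z has_derivative z') (at x)"
  shows "((\<lambda>y. Ginv y (z y)) has_derivative
          (\<lambda>h. Ginv x (z' h + (2/3) *\<^sub>R J x h (Ginv x (z x))))) (at x)"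
proof -
  define w0 where "w0 = Ginv x (z x)"
  \<comment> \<open>\<open>Ginv y (z y) = w0 + Ginv y (r y)\<close> with \<open>r x = 0\<close>, so only \<open>Ginv x\<close> and the
     derivative of \<open>r\<close> enter the derivative at \<open>x\<close>.\<close>
  define r where "r y = z y - Gop J y w0" for y
  have "((\<lambda>y. J y y w0) has_derivative (\<lambda>h. J h x w0 + J x h w0 + J x x 0)) (at x)"
    by (intro has_derivative_PC[OF J_PC] has_derivative_ident has_derivative_const)
  then have "(r has_derivative (\<lambda>h. z' h - (0 - (1/3) *\<^sub>R (J h x w0 + J x h w0 + J x x 0)))) (at x)"
    unfolding r_def Gop_def by (intro has_derivative_diff z has_derivative_const has_derivative_scaleR_right)
  moreover have "z' h - (0 - (1/3) *\<^sub>R (J h x w0 + J x h w0 + J x x 0)) = z' h + (2/3) *\<^sub>R J x h w0"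
    for h
  proof -
    have "(1/3) *\<^sub>R (J x h w0 + J x h w0) = (2/3) *\<^sub>R J x h w0"
      by (simp only: scaleR_2[symmetric] scaleR_scaleR) simp
    then show ?thesis using J_sym[of h x] linear_0[OF J_linear] by simp
  qed
  ultimately have r: "(r has_derivative (\<lambda>h. z' h + (2/3) *\<^sub>R J x h w0)) (at x)"
    by simp
  obtain K where K: "eventually (\<lambda>y. \<forall>w. norm (Ginv y w - Ginv x w) \<le> K * norm (y - x) * norm w) (at x)"
    using Ginv_lipschitz_at[OF x] .
  have "bounded_linear (Ginv x)"
    using Ginv_linear[OF x] by (simp add: linear_conv_bounded_linear)
  moreover have "r x = 0" by (simp add: r_def w0_def Gop_Ginv[OF x])
  ultimately have "((\<lambda>y. Ginv y (r y)) has_derivative (\<lambda>h. Ginv x (z' h + (2/3) *\<^sub>R J x h w0))) (at x)"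
    using has_derivative_operator_family_apply[OF _ K r] by blast
  then have "((\<lambda>y. w0 + Ginv y (r y)) has_derivative (\<lambda>h. 0 + Ginv x (z' h + (2/3) *\<^sub>R J x h w0))) (at x)"
    by (rule has_derivative_add[OF has_derivative_const])
  moreover have "w0 + Ginv y (r y) = Ginv y (z y)" if "y \<in> U_J J" for y
    using Ginv_linear[OF that] Ginv_Gop[OF that] by (simp add: r_def linear_diff)
  ultimately show ?thesis
    using open_U_J x by (auto simp: w0_def elim!: has_derivative_transform_within_open)
qed

lemma Ck_on_Ginv_apply: "Ck_on n (U_J J) z \<Longrightarrow> Ck_on n (U_J J) (\<lambda>y. Ginv y (z y))"
proof (induction n arbitrary: z)
  case 0
  have "isCont (\<lambda>y. Ginv y (z y)) x" if x: "x \<in> U_J J" for x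
  proof -
    have "bounded_linear (Ginv x)"
      using Ginv_linear[OF x] by (simp add: linear_conv_bounded_linear)
    moreover obtain K where
      "eventually (\<lambda>y. \<forall>w. norm (Ginv y w - Ginv x w) \<le> K * norm (y - x) * norm w) (at x)"
      using Ginv_lipschitz_at[OF x] .
    moreover have "isCont z x"
      using 0 x open_U_J by (simp add: continuous_on_eq_continuous_at)
    ultimately show ?thesis by (rule isCont_operator_family_apply)
  qed
  then show ?case using open_U_J by (simp add: continuous_on_eq_continuous_at)
next
  case (Suc n)
  show ?case
  proof (rule Ck_on_SucI[OF open_U_J])
    show "((\<lambda>y. Ginv y (z y)) has_derivative
        (\<lambda>h. Ginv x (frechet_derivative z (at x) h + (2/3) *\<^sub>R J x h (Ginv x (z x))))) (at x)"
      if "x \<in> U_J J" for x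
      using Ck_on_has_derivative[OF Suc.prems open_U_J that] by (rule has_derivative_Ginv_apply[OF that])
    have "Ck_on n (U_J J) (\<lambda>x. frechet_derivative z (at x) h + (2/3) *\<^sub>R J x h (Ginv x (z x)))" for h
      by (intro Ck_on_add[OF open_U_J] Ck_on_frechet_derivative[OF Suc.prems]
          Ck_on_scaleR_const[OF open_U_J] Ck_on_PC[OF J_PC open_U_J] Ck_on_ident[OF open_U_J]
          Ck_on_const Suc.IH[OF Ck_on_Suc_imp[OF Suc.prems]])
    then show "Ck_on n (U_J J) (\<lambda>x. Ginv x (frechet_derivative z (at x) h
        + (2/3) *\<^sub>R J x h (Ginv x (z x))))" for h
      by (rule Suc.IH)
  qed
qed

lemma gJ_sym: "sym_form (gJ b J x)"
  unfolding sym_form_def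
proof (intro allI)
  fix u v
  have "b (J x x u) v = b (J x x v) u"
    using J_metric[of x x u v] J_metric[of x x v u] J_sym[of v u] by simp
  moreover have "b u v = b v u" using b_sym by (simp add: sym_form_def)
  ultimately show "gJ b J x u v = gJ b J x v u"
    by (simp add: gJ_def Gop_def bilinear_lsub[OF b_bilinear] bilinear_lmul[OF b_bilinear])
qed

lemma gJ_bilinear: "bilinear (gJ b J x)"
  unfolding bilinear_def gJ_def
  using linear_add[OF Gop_linear] linear_scale[OF Gop_linear]
  by (auto intro!: linearI simp: bilinear_ladd[OF b_bilinear] bilinear_lmul[OF b_bilinear]
      bilinear_radd[OF b_bilinear] bilinear_rmul[OF b_bilinear])

lemma gJ_nondegenerate: "x \<in> U_J J \<Longrightarrow> nondegenerate (gJ b J x)"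
  unfolding nondegenerate_def gJ_def
proof (intro allI impI)
  fix u assume "x \<in> U_J J" and "\<forall>v. b (Gop J x u) v = 0"
  then have "Gop J x u = 0" using b_nondegenerate by (simp add: nondegenerate_def)
  then show "u = 0"
    using Ginv_Gop[OF \<open>x \<in> U_J J\<close>, of u] linear_0[OF Ginv_linear[OF \<open>x \<in> U_J J\<close>]] by simp
qed

lemma gJ_zero: "gJ b J 0 = b"
  by (simp add: fun_eq_iff gJ_def Gop_zero)

lemma gJ_Ginv: "x \<in> U_J J \<Longrightarrow> gJ b J x (Ginv x z) c = b z c"
  by (simp add: gJ_def Gop_Ginv)

lemma smooth_gJ: "smooth_fn_on (U_J J) (\<lambda>x. gJ b J x u v)"
proof -
  have bb: "bounded_bilinear b" using b_bilinear by (simp add: bilinear_conv_bounded_bilinear)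
  have "Ck_on n (U_J J) (\<lambda>x. b (u - (1/3) *\<^sub>R J x x u) v)" for n
    by (intro Ck_on_bilinear[OF bb open_U_J] Ck_on_diff[OF open_U_J] Ck_on_const
        Ck_on_scaleR_const[OF open_U_J] Ck_on_PC[OF J_PC open_U_J] Ck_on_ident[OF open_U_J])
  then show ?thesis by (simp add: smooth_fn_on_def gJ_def Gop_def)
qed

lemma gJ_continuous:
  assumes "e > 0"
  shows "eventually (\<lambda>y. \<forall>u v. \<bar>gJ b J y u v - gJ b J x u v\<bar> \<le> e * norm u * norm v) (nhds x)"
proof -
  obtain B where B: "B > 0" "\<And>u v. norm (b u v) \<le> B * norm u * norm v"
    using bilinear_bounded_pos[OF b_bilinear] by blast
  obtain c where c: "c \<ge> 0"
    "eventually (\<lambda>y. \<forall>u. norm (Gop J y u - Gop J x u) \<le> c * norm (y - x) * norm u) (nhds x)"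
    using Gop_lipschitz by blast
  have "eventually (\<lambda>y. B * c * norm (y - x) < e) (nhds x)"
    using assms by (rule eventually_nhds_norm_diff_less)
  with c(2) show ?thesis
  proof eventually_elim
    case (elim y)
    show ?case
    proof (intro allI)
      fix u v
      have "\<bar>gJ b J y u v - gJ b J x u v\<bar> = \<bar>b (Gop J y u - Gop J x u) v\<bar>"
        by (simp add: gJ_def bilinear_lsub[OF b_bilinear])
      also have "\<dots> \<le> B * norm (Gop J y u - Gop J x u) * norm v"
        using B(2)[of "Gop J y u - Gop J x u" v] by simp
      also have "\<dots> \<le> B * (c * norm (y - x) * norm u) * norm v"
        using elim(1) B(1) by (simp add: mult_left_mono mult_right_mono)
      also have "\<dots> = (B * c * norm (y - x)) * (norm u * norm v)" by (simp add: mult_ac)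
      also have "\<dots> \<le> e * (norm u * norm v)"
        using elim(2) by (simp add: mult_right_mono)
      also have "\<dots> = e * norm u * norm v" by (simp add: mult_ac)
      finally show "\<bar>gJ b J y u v - gJ b J x u v\<bar> \<le> e * norm u * norm v" .
    qed
  qed
qed

lemma semi_riemannian_gJ: "semi_riemannian_on (U_J J) (gJ b J)"
  unfolding semi_riemannian_on_def
proof (intro conjI ballI allI open_U_J gJ_bilinear gJ_sym gJ_nondegenerate smooth_gJ)
  fix x assume x: "x \<in> U_J J"
  obtain e where "e > 0" "\<And>y. dist y x < e \<Longrightarrow> neg_index (gJ b J y) = neg_index (gJ b J x)"
    using neg_index_locally_constant[OF gJ_bilinear gJ_sym gJ_nondegenerate[OF x] gJ_continuous]
    unfolding eventually_nhds_metric by blast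
  then show "\<exists>e>0. \<forall>y\<in>U_J J \<inter> ball x e. neg_index (gJ b J y) = neg_index (gJ b J x)"
    by (metis IntD2 dist_commute mem_ball)
qed

lemma vfield_has_derivative:
  "u \<in> vfields (U_J J) \<Longrightarrow> x \<in> U_J J \<Longrightarrow> (u has_derivative frechet_derivative u (at x)) (at x)"
  using Ck_on_has_derivative[of 0 "U_J J" u] open_U_J by (simp add: vfields_def smooth_fn_on_def)

lemma nablaJ_apply:
  assumes "(v has_derivative v') (at x)"
  shows "nablaJ J u v x = v' (u x) + (2/3) *\<^sub>R Ginv x (J (u x) (v x) x)"
  by (simp add: nablaJ_def Dflat_def Dir_def frechet_derivative_apply[OF assms])

lemma smooth_nablaJ:
  assumes "smooth_fn_on (U_J J) u" "smooth_fn_on (U_J J) v"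
  shows "smooth_fn_on (U_J J) (nablaJ J u v)"
  using assms unfolding smooth_fn_on_def nablaJ_def
  by (intro allI Ck_on_add[OF open_U_J] Ck_on_Dflat[OF open_U_J] Ck_on_scaleR_const[OF open_U_J]
      Ck_on_Ginv_apply Ck_on_PC[OF J_PC open_U_J] Ck_on_ident[OF open_U_J]) auto

lemma affine_connection_nablaJ: "affine_connection (U_J J) (nablaJ J)"
  unfolding affine_connection_def
proof (intro conjI ballI)
  fix u v assume "u \<in> vfields (U_J J)" "v \<in> vfields (U_J J)"
  then show "smooth_fn_on (U_J J) (nablaJ J u v)" by (simp add: vfields_def smooth_nablaJ)
next
  fix u w v x
  assume "u \<in> vfields (U_J J)" "w \<in> vfields (U_J J)" "v \<in> vfields (U_J J)" and x: "x \<in> U_J J"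
  then have dv: "(v has_derivative frechet_derivative v (at x)) (at x)"
    and dw: "(w has_derivative frechet_derivative w (at x)) (at x)"
    by (simp_all add: vfield_has_derivative)
  note lin = linear_add[OF has_derivative_linear[OF dv]] linear_add[OF Ginv_linear[OF x]]
    bilinear_ladd[OF J_bilinear] bilinear_radd[OF J_bilinear]
  show "nablaJ J (\<lambda>y. u y + w y) v x = nablaJ J u v x + nablaJ J w v x"
    by (simp add: nablaJ_apply[OF dv] lin scaleR_add_right)
  show "nablaJ J u (\<lambda>y. v y + w y) x = nablaJ J u v x + nablaJ J u w x"
    by (simp add: nablaJ_apply[OF has_derivative_add[OF dv dw]] nablaJ_apply[OF dv] nablaJ_apply[OF dw]
        lin scaleR_add_right)
next
  fix f u v x
  assume "f \<in> sfuns (U_J J)" "u \<in> vfields (U_J J)" "v \<in> vfields (U_J J)" and x: "x \<in> U_J J"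
  then have dv: "(v has_derivative frechet_derivative v (at x)) (at x)"
    and df: "(f has_derivative frechet_derivative f (at x)) (at x)"
    using Ck_on_has_derivative[of 0 "U_J J" f] open_U_J
    by (simp_all add: vfield_has_derivative sfuns_def smooth_fn_on_def)
  note lin = linear_scale[OF has_derivative_linear[OF dv]] linear_scale[OF Ginv_linear[OF x]]
    bilinear_lmul[OF J_bilinear] bilinear_rmul[OF J_bilinear]
  show "nablaJ J (\<lambda>y. f y *\<^sub>R u y) v x = f x *\<^sub>R nablaJ J u v x"
    by (simp add: nablaJ_apply[OF dv] lin scaleR_add_right)
  show "nablaJ J u (\<lambda>y. f y *\<^sub>R v y) x = Dir f x (u x) *\<^sub>R v x + f x *\<^sub>R nablaJ J u v x"
    by (simp add: nablaJ_apply[OF has_derivative_scaleR[OF df dv]] nablaJ_apply[OF dv] Dir_def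
        lin scaleR_add_right algebra_simps)
qed

lemma torsion_free_nablaJ: "nablaJ J u v x - nablaJ J v u x = lie u v x"
  by (simp add: nablaJ_def lie_def J_sym[of "u x"])

lemma J_metric_bianchi: "b (J x h v) w + b (J h v x) w + b (J h w x) v = 0"
proof -
  have "J x h v + J h v x + J x v h = 0" using J_bianchi[of x h v] J_sym[of v x] by simp
  then have "b (J x h v + J h v x + J x v h) w = 0"
    by (simp add: bilinear_lzero[OF b_bilinear])
  then show ?thesis
    using J_metric[of h w x v] by (simp add: bilinear_ladd[OF b_bilinear])
qed

lemma Dir_gJ:
  assumes v: "(v has_derivative v') (at x)" and w: "(w has_derivative w') (at x)"
  shows "Dir (\<lambda>y. gJ b J y (v y) (w y)) x h
    = gJ b J x (v' h) (w x) + gJ b J x (v x) (w' h) - (2/3) * b (J x h (v x)) (w x)"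
proof -
  have bb: "bounded_bilinear b" using b_bilinear by (simp add: bilinear_conv_bounded_bilinear)
  have "((\<lambda>y. v y - (1/3) *\<^sub>R J y y (v y)) has_derivative
      (\<lambda>h. v' h - (1/3) *\<^sub>R (J h x (v x) + J x h (v x) + J x x (v' h)))) (at x)"
    by (intro has_derivative_diff v has_derivative_scaleR_right has_derivative_PC[OF J_PC]
        has_derivative_ident)
  from bounded_bilinear.FDERIV[OF bb this w]
  have "Dir (\<lambda>y. gJ b J y (v y) (w y)) x h
      = b (v x - (1/3) *\<^sub>R J x x (v x)) (w' h)
        + b (v' h - (1/3) *\<^sub>R (J h x (v x) + J x h (v x) + J x x (v' h))) (w x)"
    unfolding Dir_def gJ_def Gop_def by (rule frechet_derivative_apply)
  also have "\<dots> = gJ b J x (v' h) (w x) + gJ b J x (v x) (w' h) - (2/3) * b (J x h (v x)) (w x)"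
    by (simp add: gJ_def Gop_def J_sym[of h x] bilinear_ladd[OF b_bilinear] bilinear_lsub[OF b_bilinear]
        bilinear_lmul[OF b_bilinear] algebra_simps)
  finally show ?thesis .
qed

lemma metric_nablaJ:
  assumes x: "x \<in> U_J J"
    and v: "(v has_derivative v') (at x)" and w: "(w has_derivative w') (at x)"
  shows "Dir (\<lambda>y. gJ b J y (v y) (w y)) x (u x)
    = gJ b J x (nablaJ J u v x) (w x) + gJ b J x (v x) (nablaJ J u w x)"
proof -
  have g: "bilinear (gJ b J x)" "gJ b J x p q = gJ b J x q p" for p q
    using gJ_bilinear gJ_sym by (auto simp: sym_form_def)
  have "gJ b J x (nablaJ J u v x) (w x) + gJ b J x (v x) (nablaJ J u w x)
      = gJ b J x (v' (u x)) (w x) + gJ b J x (v x) (w' (u x))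
        + (2/3) * (b (J (u x) (v x) x) (w x) + b (J (u x) (w x) x) (v x))"
    using gJ_Ginv[OF x]
    by (simp add: nablaJ_apply[OF v] nablaJ_apply[OF w] g(2)[of "v x"] bilinear_ladd[OF g(1)]
        bilinear_lmul[OF g(1)] algebra_simps)
  then show ?thesis
    using J_metric_bianchi[of x "u x" "v x" "w x"] by (simp add: Dir_gJ[OF v w] algebra_simps)
qed

lemma levi_civita_nablaJ: "levi_civita (U_J J) (gJ b J) (nablaJ J)"
  unfolding levi_civita_def
  using affine_connection_nablaJ torsion_free_nablaJ metric_nablaJ vfield_has_derivative by blast

lemma nablaJ_at_zero: "nablaJ J u v 0 = Dflat u v 0"
  by (simp add: nablaJ_def Ginv_zero linear_0[OF J_linear])

lemma has_derivative_nablaJ_at_zero: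
  assumes v: "v \<in> vfields (U_J J)" and w: "w \<in> vfields (U_J J)"
  shows "(nablaJ J v w has_derivative
     (\<lambda>h. frechet_derivative w (at 0) (frechet_derivative v (at 0) h)
        + frechet_derivative (\<lambda>y. frechet_derivative w (at y) (v 0)) (at 0) h
        + (2/3) *\<^sub>R J (v 0) (w 0) h)) (at 0)"
proof -
  have w2: "Ck_on 2 (U_J J) w" using w by (simp add: vfields_def smooth_fn_on_def)
  have dv: "(v has_derivative frechet_derivative v (at 0)) (at 0)"
    and dw: "(w has_derivative frechet_derivative w (at 0)) (at 0)"
    using v w zero_in_U_J by (simp_all add: vfield_has_derivative)
  have "((\<lambda>y. J (v y) (w y) y) has_derivative
      (\<lambda>h. J (frechet_derivative v (at 0) h) (w 0) 0 + J (v 0) (frechet_derivative w (at 0) h) 0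
         + J (v 0) (w 0) h)) (at 0)"
    by (rule has_derivative_PC[OF J_PC dv dw has_derivative_ident])
  from has_derivative_Ginv_apply[OF zero_in_U_J this]
  have "((\<lambda>y. Ginv y (J (v y) (w y) y)) has_derivative J (v 0) (w 0)) (at 0)"
    by (simp add: Ginv_zero linear_0[OF J_linear] fun_eq_iff)
  with has_derivative_Dflat[OF open_U_J zero_in_U_J w2 dv] show ?thesis
    unfolding nablaJ_def by (intro has_derivative_add has_derivative_scaleR_right)
qed

lemma curv_nablaJ_at_zero:
  assumes u: "u \<in> vfields (U_J J)" and v: "v \<in> vfields (U_J J)" and w: "w \<in> vfields (U_J J)"
  shows "curv (nablaJ J) u v w 0 = R_J J (u 0) (v 0) (w 0)"
proof -
  have "Ck_on 2 (U_J J) w" using w by (simp add: vfields_def smooth_fn_on_def)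
  then have second_sym: "frechet_derivative (\<lambda>y. frechet_derivative w (at y) (v 0)) (at 0) (u 0)
      = frechet_derivative (\<lambda>y. frechet_derivative w (at y) (u 0)) (at 0) (v 0)"
    using frechet_derivative_symmetric[OF open_U_J zero_in_U_J] by blast
  have "linear (frechet_derivative w (at 0))"
    using vfield_has_derivative[OF w zero_in_U_J] by (rule has_derivative_linear)
  then have "curv (nablaJ J) u v w 0 = (2/3) *\<^sub>R (J (v 0) (w 0) (u 0) - J (u 0) (w 0) (v 0))"
    unfolding curv_def nablaJ_at_zero Dflat_def Dir_def lie_def
    by (simp add: frechet_derivative_apply[OF has_derivative_nablaJ_at_zero[OF v w]]
        frechet_derivative_apply[OF has_derivative_nablaJ_at_zero[OF u w]] second_sym
        linear_diff algebra_simps)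
  then show ?thesis by (simp add: R_J_def J_sym[of "w 0"])
qed

lemma jacobi_op_nablaJ_at_zero:
  assumes u: "u \<in> vfields (U_J J)" and v: "v \<in> vfields (U_J J)" and w: "w \<in> vfields (U_J J)"
  shows "jacobi_op (nablaJ J) u v w 0 = J (u 0) (v 0) (w 0)"
proof -
  define A B C where "A = J (u 0) (v 0) (w 0)" and "B = J (u 0) (w 0) (v 0)" and "C = J (v 0) (w 0) (u 0)"
  have "A + C + B = 0"
    using J_bianchi[of "u 0" "v 0" "w 0"] J_sym[of "w 0" "u 0"] by (simp add: A_def B_def C_def)
  then have "A + A - (B + C) = (1 + 1 + 1) *\<^sub>R A"
    by (simp only: scaleR_add_left scaleR_one) (simp add: algebra_simps eq_neg_iff_add_eq_0)
  moreover have "jacobi_op (nablaJ J) u v w 0 = (1/3) *\<^sub>R (A + A - (B + C))"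
    by (simp add: jacobi_op_def curv_nablaJ_at_zero u v w R_J_def J_sym[of "v 0" "u 0"]
        A_def B_def C_def algebra_simps)
  ultimately show ?thesis by (simp add: A_def)
qed

end

theorem mainTheorem18:
  fixes b :: "'v::euclidean_space \<Rightarrow> 'v \<Rightarrow> real"
    and J :: "'v \<Rightarrow> 'v \<Rightarrow> 'v \<Rightarrow> 'v"
  assumes "bilinear b" and "sym_form b" and "nondegenerate b"
    and "metric_jacobi b J"
  shows "open (U_J J) \<and> 0 \<in> U_J J
    \<and> semi_riemannian_on (U_J J) (gJ b J)
    \<and> gJ b J 0 = b
    \<and> levi_civita (U_J J) (gJ b J) (nablaJ J)
    \<and> (\<forall>nabla. levi_civita (U_J J) (gJ b J) nabla \<longrightarrow>
          (\<forall>u\<in>vfields (U_J J). \<forall>v\<in>vfields (U_J J). \<forall>x\<in>U_J J. nabla u v x = nablaJ J u v x))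
    \<and> (\<forall>u\<in>vfields (U_J J). \<forall>v\<in>vfields (U_J J). \<forall>w\<in>vfields (U_J J).
          curv (nablaJ J) u v w 0 = R_J J (u 0) (v 0) (w 0)
        \<and> jacobi_op (nablaJ J) u v w 0 = J (u 0) (v 0) (w 0))"
proof -
  interpret metric_jacobi_curvature b J
    using assms by unfold_locales
  have "levi_civita (U_J J) (gJ b J) nabla \<Longrightarrow> u \<in> vfields (U_J J) \<Longrightarrow> v \<in> vfields (U_J J)
      \<Longrightarrow> x \<in> U_J J \<Longrightarrow> nabla u v x = nablaJ J u v x" for nabla u v x
    using levi_civita_unique[OF _ levi_civita_nablaJ] gJ_bilinear gJ_sym gJ_nondegenerate by blast
  then show ?thesis
    using open_U_J zero_in_U_J semi_riemannian_gJ gJ_zero levi_civita_nablaJ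
      curv_nablaJ_at_zero jacobi_op_nablaJ_at_zero by blast
qed

end
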